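(* Let $T>0$; let $D_M,D_I:\mathbb{R}\to[0,\infty)$, $d_M,d_I:\mathbb{R}\to(0,\infty)$, $\tau:\mathbb{R}\to(0,\infty)$, $p:\mathbb{R}\to[0,\infty)$ be $C^1$ and $T$-periodic; let $h\in C^1([0,\infty);[0,\infty))$. Assume: (a) there are $0<\alpha\le\beta<t_\alpha\le t_\beta<T$ with $t_\alpha-\tau(t_\alpha)=\alpha$, $t_\beta-\tau(t_\beta)=\beta$ and $p(t)=0$ for $t\in[0,\alpha]\cup[\beta,T]$; (b) $\tau'<1$ on $\mathbb{R}$; (c) $h(0)=0$, $\lim_{z\to\infty}h(z)=0$, and for some $z^*>0$, $h$ is increasing on $[0,z^* )$ and decreasing on $[z^*,\infty)$; (d) $h(\lambda z)\ge\lambda h(z)$ for $z\ge0$, $\lambda\in(0,1)$; (e) $L>1$. Let $u^*$ be the minimal positive fixed point of $\overline{Q}$ and assume moreover that $h$ is nondecreasing on $[0,u^*]$. Then $Q$ maps $\mathcal{C}_{u^*}$ into $\mathcal{C}_{u^*}$ and: (i) $T_yQ=QT_y$ for all $y\in\mathbb{R}$, where $T_y[v](x)=v(x-y)$; (ii) $Q$ is continuous on $\mathcal{C}_{u^*}$ with respect to the compact-open topology; (iii) $Q[u]\ge Q[v]$ whenever $u\ge v$ in $\mathcal{C}_{u^*}$; (iv) $\overline{Q}:[0,u^*]\to[0,u^*]$ has the two fixed points $0$ and $u^*$, and $Q[\gamma]>\gamma$ for every constant $\gamma\in(0,u^* )$; (v) $Q[\lambda\phi]\ge\lambda Q[\phi]$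 for all $\phi\in\mathcal{C}_{u^*}$ and $\lambda\in(0,1)$.
   Context: Notation. For $t>s$ let $k_M(t,s,x)=\big(4\pi\int_s^tD_M\big)^{-1/2}\exp\!\big(-\frac{x^2}{4\int_s^tD_M}-\int_s^td_M\big)$, the Green function of $\partial_t\rho=D_M(t)\partial_{xx}\rho-d_M(t)\rho$ (interpreted as $e^{-\int_s^td_M}$ times the Dirac mass at $0$ when $\int_s^tD_M=0$); $k_I$ is defined in the same way with $D_I,d_I$. Let $\overline{k}_M(t,s)=e^{-\int_s^td_M}$. For a bounded function $\phi$ on $\mathbb{R}$, set $R(t,\phi)(x)=(1-\tau'(t))\int_{\mathbb{R}}k_I(t,t-\tau(t),x-y)\,p(t-\tau(t))\,h(\phi(y))\,dy.$ The map $Q$ on bounded functions is $Q[\varphi]=k_M(T,0,\cdot)*\varphi+\int_{t_\alpha}^{t_\beta}k_M(T,s,\cdot)*R\big(s,k_M(s-\tau(s),0,\cdot)*\varphi\big)\,ds$ ($*$ = convolution in $x$), and $\overline{Q}$ is its restriction to constants: $\overline{Q}[z]=z\overline{k}_M(T,0)+\int_{t_\alpha}^{t_\beta}\overline{k}_M(T,s)R(s,z\overline{k}_M(s-\tau(s),0))ds$. Let $\partial_\varphi R(s,0)=(1-\tau'(s))\varepsilon(s)p(s-\tau(s))h'(0)$ with $\varepsilon(s)=e^{-\int_{s-\tau(s)}^sd_I}$, and $L=\frac{\overline{k}_M(T,0)}{1-\overline{k}_M(T,0)}\int_{t_\alpha}^{t_\beta}\frac{\partial_\varphi R(s,0)}{\overline{k}_M(s,s-\tau(s))}ds.$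 When $L>1$, $\overline{Q}$ has a positive fixed point and $u^*$ denotes the minimal one. $\mathcal{C}=BC(\mathbb{R};\mathbb{R})$ with the compact-open topology (induced by $\|u\|=\sum_{n\ge1}2^{-n}\sup_{|x|\le n}|u(x)|$), ordered pointwise, and $\mathcal{C}_r=\{v\in\mathcal{C}:0\le v\le r\}$. *)

theory Defs
  imports "HOL-Analysis.Analysis"
begin

definition tint :: "(real \<Rightarrow> real) \<Rightarrow> real \<Rightarrow> real \<Rightarrow> real" where
  "tint f s t = integral {s..t} f"

definition kbar :: "(real \<Rightarrow> real) \<Rightarrow> real \<Rightarrow> real \<Rightarrow> real" where
  "kbar d t s = exp (- tint d s t)"

text \<open>Green function k(t,s,x) of rho_t = D(t) rho_xx - d(t) rho (for int_s^t D > 0).\<close>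
definition green :: "(real \<Rightarrow> real) \<Rightarrow> (real \<Rightarrow> real) \<Rightarrow> real \<Rightarrow> real \<Rightarrow> real \<Rightarrow> real" where
  "green D d t s x = (4 * pi * tint D s t) powr (-1/2)
       * exp (- (x^2) / (4 * tint D s t) - tint d s t)"

text \<open>Convolution (k(t,s,.) * phi)(x) = int k(t,s,x-y) phi(y) dy; when int_s^t D = 0
  the kernel is exp(-int_s^t d) times the Dirac mass at 0.\<close>
definition kconv :: "(real \<Rightarrow> real) \<Rightarrow> (real \<Rightarrow> real) \<Rightarrow> real \<Rightarrow> real
      \<Rightarrow> (real \<Rightarrow> real) \<Rightarrow> real \<Rightarrow> real" where
  "kconv D d t s phi x =
     (if tint D s t = 0 then kbar d t s * phi x
      else integral UNIV (\<lambda>y. green D d t s (x - y) * phi y))"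

definition Rop :: "(real \<Rightarrow> real) \<Rightarrow> (real \<Rightarrow> real) \<Rightarrow> (real \<Rightarrow> real) \<Rightarrow> (real \<Rightarrow> real)
      \<Rightarrow> (real \<Rightarrow> real) \<Rightarrow> real \<Rightarrow> (real \<Rightarrow> real) \<Rightarrow> real \<Rightarrow> real" where
  "Rop DI dI tau p h t phi x =
     (1 - deriv tau t) * kconv DI dI t (t - tau t) (\<lambda>y. p (t - tau t) * h (phi y)) x"

definition Qop :: "real \<Rightarrow> (real \<Rightarrow> real) \<Rightarrow> (real \<Rightarrow> real) \<Rightarrow> (real \<Rightarrow> real) \<Rightarrow> (real \<Rightarrow> real)
      \<Rightarrow> (real \<Rightarrow> real) \<Rightarrow> (real \<Rightarrow> real) \<Rightarrow> (real \<Rightarrow> real) \<Rightarrow> real \<Rightarrow> real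
      \<Rightarrow> (real \<Rightarrow> real) \<Rightarrow> real \<Rightarrow> real" where
  "Qop T DM dM DI dI tau p h ta tb phi x =
     kconv DM dM T 0 phi x
     + integral {ta..tb} (\<lambda>s. kconv DM dM T s
          (Rop DI dI tau p h s (kconv DM dM (s - tau s) 0 phi)) x)"

definition Qbar :: "real \<Rightarrow> (real \<Rightarrow> real) \<Rightarrow> (real \<Rightarrow> real) \<Rightarrow> (real \<Rightarrow> real)
      \<Rightarrow> (real \<Rightarrow> real) \<Rightarrow> (real \<Rightarrow> real) \<Rightarrow> (real \<Rightarrow> real) \<Rightarrow> real \<Rightarrow> real
      \<Rightarrow> real \<Rightarrow> real" where
  "Qbar T dM DI dI tau p h ta tb z =
     z * kbar dM T 0
     + integral {ta..tb} (\<lambda>s. kbar dM T s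
          * Rop DI dI tau p h s (\<lambda>_. z * kbar dM (s - tau s) 0) 0)"

text \<open>partial_phi R(s,0) with eps(s) = exp(- int_{s - tau s}^s d_I); h0' = h'(0).\<close>
definition dR0 :: "(real \<Rightarrow> real) \<Rightarrow> (real \<Rightarrow> real) \<Rightarrow> (real \<Rightarrow> real) \<Rightarrow> real \<Rightarrow> real \<Rightarrow> real" where
  "dR0 dI tau p h0' s =
     (1 - deriv tau s) * exp (- tint dI (s - tau s) s) * p (s - tau s) * h0'"

definition Lnum :: "real \<Rightarrow> (real \<Rightarrow> real) \<Rightarrow> (real \<Rightarrow> real) \<Rightarrow> (real \<Rightarrow> real)
      \<Rightarrow> (real \<Rightarrow> real) \<Rightarrow> real \<Rightarrow> real \<Rightarrow> real \<Rightarrow> real" where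
  "Lnum T dM dI tau p h0' ta tb =
     kbar dM T 0 / (1 - kbar dM T 0)
     * integral {ta..tb} (\<lambda>s. dR0 dI tau p h0' s / kbar dM s (s - tau s))"

definition Cr :: "real \<Rightarrow> (real \<Rightarrow> real) set" where
  "Cr r = {v. continuous_on UNIV v \<and> (\<forall>x. 0 \<le> v x \<and> v x \<le> r)}"

text \<open>The metric inducing the compact-open topology:
  ||u|| = sum_{n \<ge> 1} 2^-n sup_{|x| \<le> n} |u x|.\<close>
definition conorm :: "(real \<Rightarrow> real) \<Rightarrow> real" where
  "conorm u = (\<Sum>n. (1/2) ^ Suc n *
      (SUP x \<in> {- real (Suc n) .. real (Suc n)}. \<bar>u x\<bar>))"

definition translate :: "real \<Rightarrow> (real \<Rightarrow> real) \<Rightarrow> real \<Rightarrow> real" where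
  "translate y v x = v (x - y)"

definition periodic :: "real \<Rightarrow> (real \<Rightarrow> real) \<Rightarrow> bool" where
  "periodic T f \<longleftrightarrow> (\<forall>t. f (t + T) = f t)"

end

(*
  Q is assembled from positivity preserving linear heat semigroups, the pointwise
  nonlinearity h and an integral over the maturation window [t_alpha, t_beta]. Each layer
  commutes with translations, is monotone because h is nondecreasing on [0, u*], and is
  subhomogeneous because h(l z) >= l h(z); these properties pass to Q.

  Continuity for the compact-open topology rests on the second moment of the heat kernel:
  mass diffuses to distance R only at order 1/R^2, so the values of Q on [-M, M] are
  determined, up to a small error, by its argument on a larger interval.

  On constants Q reduces to Qbar, whose derivative at 0 is kbar(T,0) + (1 - kbar(T,0)) L > 1.
  Hence Qbar lies above the diagonal near 0, and a crossing strictly between 0 and u* would give a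
  smaller positive fixed point, contradicting the minimality of u*.
*)

theory Submission
  imports Defs "HOL-Probability.Distributions"
begin

section \<open>Convolution with the heat kernel\<close>

definition heat_kernel :: "real \<Rightarrow> real \<Rightarrow> real" where
  "heat_kernel a z = normal_density 0 (sqrt (2 * a)) z"

definition heat_conv :: "real \<Rightarrow> (real \<Rightarrow> real) \<Rightarrow> real \<Rightarrow> real" where
  "heat_conv a g x = (if a = 0 then g x else integral UNIV (\<lambda>y. heat_kernel a (x - y) * g y))"

definition bounded_measurable :: "real \<Rightarrow> (real \<Rightarrow> real) set" where
  "bounded_measurable B = {f. f \<in> borel_measurable borel \<and> (\<forall>y. \<bar>f y\<bar> \<le> B)}"

lemma heat_kernel_nonneg [simp]: "0 \<le> heat_kernel a z"
  by (simp add: heat_kernel_def)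

lemma measurable_heat_kernel [measurable (raw)]:
  assumes [measurable]: "f \<in> borel_measurable M" "g \<in> borel_measurable M"
  shows "(\<lambda>w. heat_kernel (f w) (g w)) \<in> borel_measurable M"
  unfolding heat_kernel_def normal_density_def by measurable

lemma heat_kernel_integrable: "a > 0 \<Longrightarrow> integrable lborel (heat_kernel a)"
  unfolding heat_kernel_def[abs_def] by (rule integrable_normal_density) simp

lemma heat_kernel_integral: "a > 0 \<Longrightarrow> (\<integral>z. heat_kernel a z \<partial>lborel) = 1"
  unfolding heat_kernel_def[abs_def] by (rule integral_normal_density) simp

lemma heat_kernel_second_moment_integrable:
  "a > 0 \<Longrightarrow> integrable lborel (\<lambda>z. heat_kernel a z * z\<^sup>2)"
  using integrable_normal_moment[of "sqrt (2 * a)" 0 2] unfolding heat_kernel_def by simp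

lemma heat_kernel_second_moment: "a > 0 \<Longrightarrow> (\<integral>z. heat_kernel a z * z\<^sup>2 \<partial>lborel) = 2 * a"
  using integral_normal_moment_even[of "sqrt (2 * a)" 0 1] unfolding heat_kernel_def by simp

lemma green_eq_heat_kernel:
  assumes "tint D s t > 0"
  shows "green D d t s x = heat_kernel (tint D s t) x * kbar d t s"
proof -
  define a where "a = tint D s t"
  have a: "a > 0" and sq: "(sqrt (2 * a))\<^sup>2 = 2 * a"
    using assms a_def by simp_all
  have "(4 * pi * a) powr (-1/2) = 1 / sqrt (2 * pi * (sqrt (2 * a))\<^sup>2)"
    using a unfolding sq by (simp add: powr_minus_divide powr_half_sqrt)
  moreover have "exp (- (x^2) / (4 * a) - tint d s t)
      = exp (- (x - 0)\<^sup>2 / (2 * (sqrt (2 * a))\<^sup>2)) * exp (- tint d s t)"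
    unfolding sq exp_add[symmetric] by simp
  ultimately show ?thesis
    unfolding green_def heat_kernel_def normal_density_def kbar_def a_def[symmetric] by simp
qed

lemma heat_conv_integrand_integrable:
  assumes a: "a > 0" and [measurable]: "g \<in> borel_measurable borel" and B: "\<forall>y. \<bar>g y\<bar> \<le> B"
  shows "integrable lborel (\<lambda>z. heat_kernel a z * g (x - z))"
proof (rule Bochner_Integration.integrable_bound[where f="\<lambda>z. B * heat_kernel a z"])
  show "integrable lborel (\<lambda>z. B * heat_kernel a z)"
    using heat_kernel_integrable[OF a] by simp
  have "B \<ge> 0" using B by (metis abs_ge_zero order_trans)
  show "AE z in lborel. norm (heat_kernel a z * g (x - z)) \<le> norm (B * heat_kernel a z)"
  proof (rule AE_I2)
    fix z
    have "heat_kernel a z * \<bar>g (x - z)\<bar> \<le> heat_kernel a z * B"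
      using B by (simp add: mult_left_mono)
    then show "norm (heat_kernel a z * g (x - z)) \<le> norm (B * heat_kernel a z)"
      using \<open>B \<ge> 0\<close> by (simp add: abs_mult mult.commute)
  qed
qed measurable

lemma heat_conv_eq_lebesgue_integral:
  assumes a: "a > 0" and [measurable]: "g \<in> borel_measurable borel" and B: "\<forall>y. \<bar>g y\<bar> \<le> B"
  shows "heat_conv a g x = (\<integral>z. heat_kernel a z * g (x - z) \<partial>lborel)"
proof -
  let ?f = "\<lambda>y. heat_kernel a (x - y) * g y"
  have "integrable lborel (\<lambda>z. ?f (x + (-1) * z))"
    using heat_conv_integrand_integrable[OF a _ B, of x] by simp
  then have "integrable lborel ?f"
    using lborel_integrable_real_affine_iff[of "-1" ?f x] by simp
  then have "integral UNIV ?f = (\<integral>y. ?f y \<partial>lborel)"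
    by (rule integral_unique[OF has_integral_integral_real])
  also have "\<dots> = \<bar>-1\<bar> *\<^sub>R (\<integral>z. ?f (x + (-1) * z) \<partial>lborel)"
    by (rule lborel_integral_real_affine) simp
  finally show ?thesis using a by (simp add: heat_conv_def)
qed

lemma heat_conv_const:
  assumes "a \<ge> 0" shows "heat_conv a (\<lambda>_. c) x = c"
proof (cases "a = 0")
  case False
  then have a: "a > 0" using assms by simp
  have "heat_conv a (\<lambda>_. c) x = (\<integral>z. heat_kernel a z * c \<partial>lborel)"
    by (rule heat_conv_eq_lebesgue_integral[OF a, of _ "\<bar>c\<bar>"]) auto
  also have "\<dots> = c" using heat_kernel_integral[OF a] by simp
  finally show ?thesis .
qed (simp add: heat_conv_def)

lemma heat_conv_mono:
  assumes a: "a \<ge> 0" and [measurable]: "f \<in> borel_measurable borel" "g \<in> borel_measurable borel"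
    and B: "\<forall>y. \<bar>f y\<bar> \<le> B" "\<forall>y. \<bar>g y\<bar> \<le> B" and le: "\<forall>y. f y \<le> g y"
  shows "heat_conv a f x \<le> heat_conv a g x"
proof (cases "a = 0")
  case False
  then have a: "a > 0" using assms by simp
  have "(\<integral>z. heat_kernel a z * f (x - z) \<partial>lborel) \<le> (\<integral>z. heat_kernel a z * g (x - z) \<partial>lborel)"
    using heat_conv_integrand_integrable[OF a _ B(1)] heat_conv_integrand_integrable[OF a _ B(2)]
    by (intro integral_mono) (simp_all add: le mult_left_mono)
  then show ?thesis
    using heat_conv_eq_lebesgue_integral[OF a _ B(1)] heat_conv_eq_lebesgue_integral[OF a _ B(2)]
    by simp
qed (use le in \<open>simp add: heat_conv_def\<close>)

lemma heat_conv_diff: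
  assumes a: "a \<ge> 0" and [measurable]: "f \<in> borel_measurable borel" "g \<in> borel_measurable borel"
    and B: "\<forall>y. \<bar>f y\<bar> \<le> B" "\<forall>y. \<bar>g y\<bar> \<le> B"
  shows "heat_conv a (\<lambda>y. f y - g y) x = heat_conv a f x - heat_conv a g x"
proof (cases "a = 0")
  case False
  then have a: "a > 0" using assms by simp
  have B2: "\<forall>y. \<bar>f y - g y\<bar> \<le> 2 * B"
    using B by (metis abs_triangle_ineq4 add_mono mult_2 order_trans)
  have "heat_conv a (\<lambda>y. f y - g y) x
      = (\<integral>z. heat_kernel a z * f (x - z) - heat_kernel a z * g (x - z) \<partial>lborel)"
    by (subst heat_conv_eq_lebesgue_integral[OF a _ B2]) (simp_all add: right_diff_distrib)
  also have "\<dots> = heat_conv a f x - heat_conv a g x"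
    using heat_conv_integrand_integrable[OF a _ B(1)] heat_conv_integrand_integrable[OF a _ B(2)]
      heat_conv_eq_lebesgue_integral[OF a _ B(1)] heat_conv_eq_lebesgue_integral[OF a _ B(2)]
    by simp
  finally show ?thesis .
qed (simp add: heat_conv_def)

lemma heat_conv_cmult: "heat_conv a (\<lambda>y. c * f y) x = c * heat_conv a f x"
proof -
  have "integral UNIV (\<lambda>y. heat_kernel a (x - y) * (c * f y))
      = integral UNIV (\<lambda>y. c *\<^sub>R (heat_kernel a (x - y) * f y))"
    by (simp add: mult.left_commute)
  then show ?thesis by (simp add: heat_conv_def)
qed

lemma heat_conv_shift:
  assumes "a \<ge> 0" and [measurable]: "g \<in> borel_measurable borel" and B: "\<forall>y. \<bar>g y\<bar> \<le> B"
  shows "heat_conv a (\<lambda>y. g (y - c)) x = heat_conv a g (x - c)"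
proof (cases "a = 0")
  case False
  then have a: "a > 0" using assms by simp
  have B': "\<forall>y. \<bar>g (y - c)\<bar> \<le> B" using B by simp
  show ?thesis
    using heat_conv_eq_lebesgue_integral[OF a _ B, of "x - c"]
      heat_conv_eq_lebesgue_integral[OF a _ B', of x]
    by (simp add: diff_diff_eq add.commute)
qed (simp add: heat_conv_def)

lemma heat_conv_range:
  assumes "a \<ge> 0" "\<phi> \<in> borel_measurable borel" "\<forall>y. lo \<le> \<phi> y \<and> \<phi> y \<le> hi"
  shows "lo \<le> heat_conv a \<phi> x \<and> heat_conv a \<phi> x \<le> hi"
proof -
  have B: "\<forall>y. \<bar>\<phi> y\<bar> \<le> \<bar>lo\<bar> + \<bar>hi\<bar>"
  proof
    fix y show "\<bar>\<phi> y\<bar> \<le> \<bar>lo\<bar> + \<bar>hi\<bar>" using assms(3)[rule_format, of y] by linarith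
  qed
  have "heat_conv a (\<lambda>_. lo) x \<le> heat_conv a \<phi> x"
    by (rule heat_conv_mono[where B="\<bar>lo\<bar> + \<bar>hi\<bar>"]) (use assms B in auto)
  moreover have "heat_conv a \<phi> x \<le> heat_conv a (\<lambda>_. hi) x"
    by (rule heat_conv_mono[where B="\<bar>lo\<bar> + \<bar>hi\<bar>"]) (use assms B in auto)
  ultimately show ?thesis using heat_conv_const[OF assms(1)] by simp
qed

text \<open>Chebyshev: outside the window the global bound \<open>B\<close> is at most \<open>B z^2 / R^2\<close>.\<close>
lemma window_chebyshev_bound:
  fixes u :: "real \<Rightarrow> real"
  assumes B: "\<forall>y. \<bar>u y\<bar> \<le> B" and R: "R > 0"
    and loc: "\<forall>y. \<bar>y\<bar> \<le> N + R \<longrightarrow> \<bar>u y\<bar> \<le> \<eta>" and x: "\<bar>x\<bar> \<le> N"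
  shows "\<bar>u (x - z)\<bar> \<le> \<eta> + B / R\<^sup>2 * z\<^sup>2"
proof -
  have B0: "B \<ge> 0" using B by (metis abs_ge_zero order_trans)
  have \<eta>0: "\<eta> \<ge> 0" using loc[rule_format, of 0] x R by fastforce
  show ?thesis
  proof (cases "\<bar>x - z\<bar> \<le> N + R")
    case True
    have "0 \<le> B / R\<^sup>2 * z\<^sup>2" using B0 by simp
    then show ?thesis using loc True by fastforce
  next
    case False
    then have "\<bar>z\<bar> \<ge> R" using x by linarith
    then have "R\<^sup>2 \<le> z\<^sup>2" using R by (metis abs_le_square_iff abs_of_pos)
    then have "B \<le> B / R\<^sup>2 * z\<^sup>2" using R B0 by (simp add: field_simps mult_left_mono)
    then show ?thesis using B[rule_format, of "x - z"] \<eta>0 by linarith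
  qed
qed

lemma heat_conv_local_bound:
  assumes a0: "a \<ge> 0" and [measurable]: "f \<in> borel_measurable borel" "g \<in> borel_measurable borel"
    and B1: "\<forall>y. \<bar>f y\<bar> \<le> B1" "\<forall>y. \<bar>g y\<bar> \<le> B1"
    and B: "\<forall>y. \<bar>f y - g y\<bar> \<le> B" and R: "R > 0"
    and loc: "\<forall>y. \<bar>y\<bar> \<le> N + R \<longrightarrow> \<bar>f y - g y\<bar> \<le> \<eta>" and x: "\<bar>x\<bar> \<le> N"
  shows "\<bar>heat_conv a f x - heat_conv a g x\<bar> \<le> \<eta> + 2 * a * B / R\<^sup>2"
proof (cases "a = 0")
  case True
  then show ?thesis using loc x R by (simp add: heat_conv_def)
next
  case False
  then have a: "a > 0" using a0 by simp
  have B2: "\<forall>y. \<bar>f y - g y\<bar> \<le> 2 * B1"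
    using B1 by (metis abs_triangle_ineq4 add_mono mult_2 order_trans)
  have diff: "heat_conv a f x - heat_conv a g x
      = (\<integral>z. heat_kernel a z * (f (x - z) - g (x - z)) \<partial>lborel)"
    using heat_conv_diff[OF a0 _ _ B1, of x] heat_conv_eq_lebesgue_integral[OF a _ B2, of x] by simp
  have "\<bar>heat_conv a f x - heat_conv a g x\<bar>
      \<le> (\<integral>z. \<bar>heat_kernel a z * (f (x - z) - g (x - z))\<bar> \<partial>lborel)"
    unfolding diff by (rule integral_abs_bound)
  also have "\<dots> \<le> (\<integral>z. \<eta> * heat_kernel a z + B / R\<^sup>2 * (heat_kernel a z * z\<^sup>2) \<partial>lborel)"
  proof (intro integral_mono)
    show "integrable lborel (\<lambda>z. \<bar>heat_kernel a z * (f (x - z) - g (x - z))\<bar>)"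
      using heat_conv_integrand_integrable[OF a _ B2] by simp
    show "integrable lborel (\<lambda>z. \<eta> * heat_kernel a z + B / R\<^sup>2 * (heat_kernel a z * z\<^sup>2))"
      using heat_kernel_integrable[OF a] heat_kernel_second_moment_integrable[OF a] by simp
    fix z
    show "\<bar>heat_kernel a z * (f (x - z) - g (x - z))\<bar> \<le> \<eta> * heat_kernel a z + B / R\<^sup>2 * (heat_kernel a z * z\<^sup>2)"
    proof -
      have "\<bar>heat_kernel a z * (f (x - z) - g (x - z))\<bar> = heat_kernel a z * \<bar>f (x - z) - g (x - z)\<bar>"
        by (simp add: abs_mult)
      also have "\<dots> \<le> heat_kernel a z * (\<eta> + B / R\<^sup>2 * z\<^sup>2)"
        using window_chebyshev_bound[of "\<lambda>y. f y - g y", OF B R loc x]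
        by (intro mult_left_mono) simp_all
      finally show ?thesis by (simp add: algebra_simps)
    qed
  qed
  also have "\<dots> = \<eta> + B / R\<^sup>2 * (2 * a)"
    using heat_kernel_integrable[OF a] heat_kernel_second_moment_integrable[OF a]
      heat_kernel_integral[OF a] heat_kernel_second_moment[OF a] by simp
  finally show ?thesis by (simp add: mult.commute mult.left_commute)
qed

lemma measurable_case_prod_app:
  assumes "case_prod F \<in> measurable (M1 \<Otimes>\<^sub>M M2) K" "f \<in> measurable N M1" "g \<in> measurable N M2"
  shows "(\<lambda>w. F (f w) (g w)) \<in> measurable N K"
  using measurable_compose[OF measurable_Pair[OF assms(2,3)] assms(1)] by simp

lemma measurable_heat_conv_param:
  fixes A :: "real \<Rightarrow> real" and F :: "real \<Rightarrow> real \<Rightarrow> real"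
  assumes [measurable]: "A \<in> borel_measurable borel" and A0: "\<forall>s. A s \<ge> 0"
    and [measurable]: "case_prod F \<in> borel_measurable (borel \<Otimes>\<^sub>M borel)"
    and bounded: "\<forall>s. \<exists>B. \<forall>y. \<bar>F s y\<bar> \<le> B"
  shows "(\<lambda>(s, x). heat_conv (A s) (F s) x) \<in> borel_measurable (borel \<Otimes>\<^sub>M borel)"
proof -
  have eq: "(\<lambda>(s, x). heat_conv (A s) (F s) x) =
     (\<lambda>(s, x). if A s = 0 then F s x else (\<integral>z. heat_kernel (A s) z * F s (x - z) \<partial>lborel))"
  proof (intro ext, clarify)
    fix s x
    have [measurable]: "F s \<in> borel_measurable borel" by measurable
    obtain B where "\<forall>y. \<bar>F s y\<bar> \<le> B" using bounded by blast
    then show "heat_conv (A s) (F s) x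
        = (if A s = 0 then F s x else (\<integral>z. heat_kernel (A s) z * F s (x - z) \<partial>lborel))"
      using heat_conv_eq_lebesgue_integral[of "A s" "F s" B x] A0[rule_format, of s]
      by (auto simp: heat_conv_def)
  qed
  have [measurable]: "(\<lambda>w. F (fst (fst w)) (snd (fst w) - snd w))
      \<in> borel_measurable ((borel \<Otimes>\<^sub>M borel) \<Otimes>\<^sub>M lborel)"
    by (rule measurable_case_prod_app[of F borel borel]) measurable
  have "(\<lambda>w. \<integral>z. heat_kernel (A (fst w)) z * F (fst w) (snd w - z) \<partial>lborel)
      \<in> borel_measurable (borel \<Otimes>\<^sub>M borel)"
    by (rule lborel.borel_measurable_lebesgue_integral[where f="\<lambda>w z. heat_kernel (A (fst w)) z * F (fst w) (snd w - z)"])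
      (unfold case_prod_beta', measurable)
  then have [measurable]: "(\<lambda>(s, x). \<integral>z. heat_kernel (A s) z * F s (x - z) \<partial>lborel)
      \<in> borel_measurable (borel \<Otimes>\<^sub>M borel)"
    by (simp add: case_prod_beta')
  show ?thesis unfolding eq by measurable
qed

lemma continuous_on_integrable_Icc:
  "continuous_on UNIV (D::real\<Rightarrow>real) \<Longrightarrow> D integrable_on {u..v}"
  by (metis continuous_on_subset integrable_continuous_interval subset_UNIV)

lemma tint_nonneg: "\<forall>t. D t \<ge> 0 \<Longrightarrow> tint D u v \<ge> 0"
  unfolding tint_def
  by (cases "D integrable_on {u..v}") (auto intro: integral_nonneg simp: not_integrable_integral)

lemma tint_mono:
  assumes "continuous_on UNIV D" "\<forall>t. D t \<ge> 0" "lo \<le> u" "v \<le> hi"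
  shows "tint D u v \<le> tint D lo hi"
proof (cases "u \<le> v")
  case True
  then show ?thesis unfolding tint_def
    using assms by (intro integral_subset_le continuous_on_integrable_Icc) auto
qed (use tint_nonneg[OF assms(2)] in \<open>simp add: tint_def\<close>)

lemma tint_add:
  assumes "continuous_on UNIV D" "a \<le> b" "b \<le> c"
  shows "tint D a b + tint D b c = tint D a c"
  unfolding tint_def using assms
  by (intro Henstock_Kurzweil_Integration.integral_combine) (auto intro: continuous_on_integrable_Icc)

lemma measurable_tint:
  assumes "continuous_on UNIV D"
  shows "(\<lambda>(u, v). tint D u v) \<in> borel_measurable (borel \<Otimes>\<^sub>M borel)"
proof -
  have [measurable]: "D \<in> borel_measurable borel"
    using assms by (rule borel_measurable_continuous_onI)
  have eq: "tint D u v = (\<integral>y. indicator {u..v} y * D y \<partial>lborel)" for u v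
  proof -
    have "set_integrable lborel {u..v} D"
      by (rule borel_integrable_atLeastAtMost') (use assms continuous_on_subset in blast)
    from set_borel_integral_eq_integral(2)[OF this] show ?thesis
      unfolding tint_def by (simp add: set_lebesgue_integral_def)
  qed
  have "(\<lambda>w. \<integral>y. indicator {fst w..snd w} y * D y \<partial>lborel) \<in> borel_measurable (borel \<Otimes>\<^sub>M borel)"
    by (rule lborel.borel_measurable_lebesgue_integral[where f="\<lambda>w y. indicator {fst w..snd w} y * D y"])
      (simp add: indicator_def case_prod_beta')
  then show ?thesis unfolding eq by (simp add: case_prod_beta')
qed

lemma kbar_pos: "kbar d t s > 0"
  by (simp add: kbar_def)

lemma kbar_le_1: "\<forall>t. d t \<ge> 0 \<Longrightarrow> kbar d t s \<le> 1"
  unfolding kbar_def using tint_nonneg[of d s t] by simp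

lemma kconv_eq_heat_conv:
  assumes "\<forall>t. D t \<ge> 0"
  shows "kconv D d t s g x = kbar d t s * heat_conv (tint D s t) g x"
proof (cases "tint D s t = 0")
  case False
  then have "tint D s t > 0" using tint_nonneg[OF assms, of s t] by simp
  then have "integral UNIV (\<lambda>y. green D d t s (x - y) * g y)
      = integral UNIV (\<lambda>y. kbar d t s *\<^sub>R (heat_kernel (tint D s t) (x - y) * g y))"
    by (simp add: green_eq_heat_kernel mult_ac)
  then show ?thesis using False by (simp add: kconv_def heat_conv_def)
qed (simp add: kconv_def heat_conv_def)

lemma cmult_heat_conv_range:
  assumes "a \<ge> 0" "0 \<le> c" "c \<le> 1" "f \<in> borel_measurable borel" "\<forall>y. 0 \<le> f y \<and> f y \<le> B"
  shows "0 \<le> c * heat_conv a f x \<and> c * heat_conv a f x \<le> B"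
proof -
  have "0 \<le> heat_conv a f x" "heat_conv a f x \<le> B"
    using heat_conv_range[OF assms(1,4,5)] by auto
  moreover from this have "c * heat_conv a f x \<le> 1 * B"
    using assms(2,3) by (intro mult_mono) auto
  ultimately show ?thesis using assms(2) by simp
qed

lemma cmult_heat_conv_mono:
  assumes "a \<ge> 0" "c \<ge> 0" "f \<in> borel_measurable borel" "g \<in> borel_measurable borel"
    "\<forall>y. \<bar>f y\<bar> \<le> B" "\<forall>y. \<bar>g y\<bar> \<le> B" "\<forall>y. f y \<le> g y"
  shows "c * heat_conv a f x \<le> c * heat_conv a g x"
  using heat_conv_mono[OF assms(1,3-7)] assms(2) by (simp add: mult_left_mono)

lemma measurable_slice:
  "(\<lambda>(s, y). F s y) \<in> borel_measurable (borel \<Otimes>\<^sub>M borel) \<Longrightarrow> F s \<in> borel_measurable borel"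
  using measurable_Pair2[of "\<lambda>(s, y). F s y" borel borel borel s] by simp

lemma bounded_measurable_integrable_on:
  fixes f :: "real \<Rightarrow> real"
  assumes [measurable]: "f \<in> borel_measurable borel" and "\<forall>s\<in>{a..b}. \<bar>f s\<bar> \<le> B"
  shows "f integrable_on {a..b}"
proof -
  have "set_integrable lborel {a..b} f"
    unfolding set_integrable_def
    by (rule integrableI_bounded_set_indicator[where B=B]) (use assms in \<open>auto simp: emeasure_lborel_Icc_eq\<close>)
  then show ?thesis by (rule set_borel_integral_eq_integral(1))
qed

lemma continuous_bounded_Icc:
  fixes f :: "real \<Rightarrow> real"
  assumes "continuous_on UNIV f"
  obtains K where "\<forall>s\<in>{a..b}. \<bar>f s\<bar> \<le> K"
proof -
  have "compact (f ` {a..b})"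
    by (rule compact_continuous_image) (rule continuous_on_subset[OF assms], auto)
  then show ?thesis using that compact_imp_bounded bounded_iff by (metis image_eqI real_norm_def)
qed

lemma bounded_measurableD:
  assumes "f \<in> bounded_measurable B"
  shows "f \<in> borel_measurable borel" "\<forall>y. \<bar>f y\<bar> \<le> B"
  using assms unfolding bounded_measurable_def by auto

lemma bounded_measurable_mono: "B \<le> B' \<Longrightarrow> bounded_measurable B \<subseteq> bounded_measurable B'"
  unfolding bounded_measurable_def by (auto intro: order_trans)

section \<open>Equicontinuity for locally uniform convergence\<close>

definition locally_close :: "real \<Rightarrow> real \<Rightarrow> (real \<Rightarrow> real) \<Rightarrow> (real \<Rightarrow> real) \<Rightarrow> bool" where
  "locally_close N \<eta> f g \<longleftrightarrow> (\<forall>y. \<bar>y\<bar> \<le> N \<longrightarrow> \<bar>f y - g y\<bar> \<le> \<eta>)"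

text \<open>Equicontinuity of the maps \<open>F i\<close>, uniformly in \<open>i\<close>, for the uniform structure of locally
  uniform convergence, which induces the compact-open topology.\<close>
definition locally_uniformly_equicontinuous ::
    "'i set \<Rightarrow> (real \<Rightarrow> real) set \<Rightarrow> ('i \<Rightarrow> (real \<Rightarrow> real) \<Rightarrow> real \<Rightarrow> real) \<Rightarrow> bool" where
  "locally_uniformly_equicontinuous I S F \<longleftrightarrow>
     (\<forall>\<epsilon>>0. \<forall>M. \<exists>N. \<exists>\<delta>>0. \<forall>i\<in>I. \<forall>f\<in>S. \<forall>g\<in>S.
        locally_close N \<delta> f g \<longrightarrow> locally_close M \<epsilon> (F i f) (F i g))"

lemma locally_close_mono:
  "locally_close N \<eta> f g \<Longrightarrow> N' \<le> N \<Longrightarrow> \<eta> \<le> \<eta>' \<Longrightarrow> locally_close N' \<eta>' f g"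
  unfolding locally_close_def by (meson order.trans)

lemma continuous_translate_locally_close:
  assumes "continuous_on UNIV \<phi>" "\<delta> > 0"
  obtains d where "d > 0" "\<And>c. \<bar>c\<bar> < d \<Longrightarrow> locally_close N \<delta> (translate c \<phi>) \<phi>"
proof -
  let ?K = "{- \<bar>N\<bar> - 1 .. \<bar>N\<bar> + 1}"
  have "uniformly_continuous_on ?K \<phi>"
    using assms(1) by (intro compact_uniformly_continuous) (auto intro: continuous_on_subset)
  then obtain d0 where "d0 > 0" and d0: "\<forall>x\<in>?K. \<forall>x'\<in>?K. dist x' x < d0 \<longrightarrow> dist (\<phi> x') (\<phi> x) < \<delta>"
    using assms(2) unfolding uniformly_continuous_on_def by metis
  have "locally_close N \<delta> (translate c \<phi>) \<phi>" if "\<bar>c\<bar> < min d0 1" for c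
    unfolding locally_close_def translate_def
  proof (intro allI impI)
    fix y assume "\<bar>y\<bar> \<le> N"
    then have "y \<in> ?K" "y - c \<in> ?K" "dist (y - c) y < d0"
      using that by (auto simp: dist_real_def)
    then have "dist (\<phi> (y - c)) (\<phi> y) < \<delta>"
      using d0 by blast
    then show "\<bar>\<phi> (y - c) - \<phi> y\<bar> \<le> \<delta>"
      by (simp add: dist_real_def)
  qed
  then show ?thesis using that[of "min d0 1"] \<open>d0 > 0\<close> by simp
qed

lemma locally_uniformly_equicontinuous_subset:
  "locally_uniformly_equicontinuous I S F \<Longrightarrow> S' \<subseteq> S \<Longrightarrow> locally_uniformly_equicontinuous I S' F"
  unfolding locally_uniformly_equicontinuous_def by (meson subsetD)

lemma locally_uniformly_equicontinuous_cong:
  "locally_uniformly_equicontinuous I S F \<Longrightarrow> (\<And>i f. i \<in> I \<Longrightarrow> f \<in> S \<Longrightarrow> G i f = F i f)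
    \<Longrightarrow> locally_uniformly_equicontinuous I S G"
  unfolding locally_uniformly_equicontinuous_def by simp

lemma locally_uniformly_equicontinuous_compose:
  assumes F: "locally_uniformly_equicontinuous I S F" and G: "locally_uniformly_equicontinuous I S' G"
    and maps: "\<And>i f. i \<in> I \<Longrightarrow> f \<in> S \<Longrightarrow> F i f \<in> S'"
  shows "locally_uniformly_equicontinuous I S (\<lambda>i f. G i (F i f))"
  unfolding locally_uniformly_equicontinuous_def
proof (intro allI impI)
  fix \<epsilon> :: real and M assume "\<epsilon> > 0"
  then obtain N1 \<delta>1 where "\<delta>1 > 0" and G': "\<forall>i\<in>I. \<forall>f\<in>S'. \<forall>g\<in>S'.
      locally_close N1 \<delta>1 f g \<longrightarrow> locally_close M \<epsilon> (G i f) (G i g)"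
    using G unfolding locally_uniformly_equicontinuous_def by blast
  then obtain N \<delta> where "\<delta> > 0" and F': "\<forall>i\<in>I. \<forall>f\<in>S. \<forall>g\<in>S.
      locally_close N \<delta> f g \<longrightarrow> locally_close N1 \<delta>1 (F i f) (F i g)"
    using F unfolding locally_uniformly_equicontinuous_def by blast
  show "\<exists>N. \<exists>\<delta>>0. \<forall>i\<in>I. \<forall>f\<in>S. \<forall>g\<in>S.
      locally_close N \<delta> f g \<longrightarrow> locally_close M \<epsilon> (G i (F i f)) (G i (F i g))"
    using \<open>\<delta> > 0\<close> F' G' maps by blast
qed

lemma locally_uniformly_equicontinuous_add:
  assumes F: "locally_uniformly_equicontinuous I S F" and G: "locally_uniformly_equicontinuous I S G"
  shows "locally_uniformly_equicontinuous I S (\<lambda>i f x. F i f x + G i f x)"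
  unfolding locally_uniformly_equicontinuous_def
proof (intro allI impI)
  fix \<epsilon> :: real and M assume "\<epsilon> > 0"
  then have "\<epsilon> / 2 > 0" by simp
  then obtain N1 \<delta>1 N2 \<delta>2 where "\<delta>1 > 0" "\<delta>2 > 0"
    and F': "\<forall>i\<in>I. \<forall>f\<in>S. \<forall>g\<in>S. locally_close N1 \<delta>1 f g \<longrightarrow> locally_close M (\<epsilon>/2) (F i f) (F i g)"
    and G': "\<forall>i\<in>I. \<forall>f\<in>S. \<forall>g\<in>S. locally_close N2 \<delta>2 f g \<longrightarrow> locally_close M (\<epsilon>/2) (G i f) (G i g)"
    using F G unfolding locally_uniformly_equicontinuous_def by metis
  have "locally_close M \<epsilon> (\<lambda>x. F i f x + G i f x) (\<lambda>x. F i g x + G i g x)"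
    if "i \<in> I" "f \<in> S" "g \<in> S" "locally_close (max N1 N2) (min \<delta>1 \<delta>2) f g" for i f g
    unfolding locally_close_def
  proof (intro allI impI)
    fix y :: real assume "\<bar>y\<bar> \<le> M"
    have "locally_close N1 \<delta>1 f g" "locally_close N2 \<delta>2 f g"
      using locally_close_mono[OF that(4)] by auto
    then have "\<bar>F i f y - F i g y\<bar> \<le> \<epsilon>/2" "\<bar>G i f y - G i g y\<bar> \<le> \<epsilon>/2"
      using F' G' that(1-3) \<open>\<bar>y\<bar> \<le> M\<close> unfolding locally_close_def by blast+
    then show "\<bar>F i f y + G i f y - (F i g y + G i g y)\<bar> \<le> \<epsilon>"
      unfolding abs_le_iff by linarith
  qed
  then show "\<exists>N. \<exists>\<delta>>0. \<forall>i\<in>I. \<forall>f\<in>S. \<forall>g\<in>S.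
      locally_close N \<delta> f g \<longrightarrow> locally_close M \<epsilon> (\<lambda>x. F i f x + G i f x) (\<lambda>x. F i g x + G i g x)"
    using \<open>\<delta>1 > 0\<close> \<open>\<delta>2 > 0\<close> by (intro exI[of _ "max N1 N2"] exI[of _ "min \<delta>1 \<delta>2"]) auto
qed

lemma locally_uniformly_equicontinuous_integral:
  fixes a b :: real
  assumes W: "locally_uniformly_equicontinuous {a..b} S W"
    and int: "\<And>f x. f \<in> S \<Longrightarrow> (\<lambda>s. W s f x) integrable_on {a..b}"
  shows "locally_uniformly_equicontinuous I S (\<lambda>_ f x. integral {a..b} (\<lambda>s. W s f x))"
  unfolding locally_uniformly_equicontinuous_def
proof (intro allI impI)
  fix \<epsilon> :: real and M assume "\<epsilon> > 0"
  define \<eta> where "\<eta> = \<epsilon> / (\<bar>b - a\<bar> + 1)"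
  have "\<eta> > 0" using \<open>\<epsilon> > 0\<close> by (simp add: \<eta>_def)
  have "\<eta> * measure lborel {a..b} \<le> \<eta> * (\<bar>b - a\<bar> + 1)"
    using \<open>\<eta> > 0\<close> by (intro mult_left_mono) auto
  also have "\<dots> = \<epsilon>" by (simp add: \<eta>_def)
  finally have \<eta>: "\<eta> * measure lborel {a..b} \<le> \<epsilon>" .
  obtain N \<delta> where "\<delta> > 0" and W': "\<forall>s\<in>{a..b}. \<forall>f\<in>S. \<forall>g\<in>S.
      locally_close N \<delta> f g \<longrightarrow> locally_close M \<eta> (W s f) (W s g)"
    using W \<open>\<eta> > 0\<close> unfolding locally_uniformly_equicontinuous_def by blast
  have "locally_close M \<epsilon> (\<lambda>x. integral {a..b} (\<lambda>s. W s f x)) (\<lambda>x. integral {a..b} (\<lambda>s. W s g x))"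
    if "f \<in> S" "g \<in> S" "locally_close N \<delta> f g" for f g
    unfolding locally_close_def
  proof (intro allI impI)
    fix x :: real assume "\<bar>x\<bar> \<le> M"
    then have bound: "\<bar>W s f x - W s g x\<bar> \<le> \<eta>" if "s \<in> {a..b}" for s
      using W' \<open>f \<in> S\<close> \<open>g \<in> S\<close> \<open>locally_close N \<delta> f g\<close> that unfolding locally_close_def by blast
    have "((\<lambda>s. W s f x - W s g x) has_integral
        (integral {a..b} (\<lambda>s. W s f x) - integral {a..b} (\<lambda>s. W s g x))) {a..b}"
      using int[OF \<open>f \<in> S\<close>] int[OF \<open>g \<in> S\<close>] by (intro has_integral_diff) auto
    from has_integral_bound_real[OF less_imp_le[OF \<open>\<eta> > 0\<close>] finite.emptyI this] bound
    show "\<bar>integral {a..b} (\<lambda>s. W s f x) - integral {a..b} (\<lambda>s. W s g x)\<bar> \<le> \<epsilon>"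
      using \<eta> by fastforce
  qed
  then show "\<exists>N. \<exists>\<delta>>0. \<forall>i\<in>I. \<forall>f\<in>S. \<forall>g\<in>S. locally_close N \<delta> f g \<longrightarrow>
      locally_close M \<epsilon> (\<lambda>x. integral {a..b} (\<lambda>s. W s f x)) (\<lambda>x. integral {a..b} (\<lambda>s. W s g x))"
    using \<open>\<delta> > 0\<close> by blast
qed

lemma locally_uniformly_equicontinuous_pointwise:
  assumes uc: "uniformly_continuous_on J h" and w: "\<And>i. i \<in> I \<Longrightarrow> \<bar>w i\<bar> \<le> K"
  shows "locally_uniformly_equicontinuous I {f. \<forall>y. f y \<in> J} (\<lambda>i f y. w i * h (f y))"
  unfolding locally_uniformly_equicontinuous_def
proof (intro allI impI)
  fix \<epsilon> :: real and M assume "\<epsilon> > 0"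
  then have "\<epsilon> / (\<bar>K\<bar> + 1) > 0" by simp
  then obtain d where "d > 0" and d: "\<forall>a\<in>J. \<forall>b\<in>J. dist b a < d \<longrightarrow> dist (h b) (h a) < \<epsilon> / (\<bar>K\<bar> + 1)"
    using uc unfolding uniformly_continuous_on_def by blast
  have "locally_close M \<epsilon> (\<lambda>y. w i * h (f y)) (\<lambda>y. w i * h (g y))"
    if "i \<in> I" "\<forall>y. f y \<in> J" "\<forall>y. g y \<in> J" "locally_close M (d/2) f g" for i f g
    unfolding locally_close_def
  proof (intro allI impI)
    fix y :: real assume "\<bar>y\<bar> \<le> M"
    then have "\<bar>h (f y) - h (g y)\<bar> \<le> \<epsilon> / (\<bar>K\<bar> + 1)"
      using d that \<open>d > 0\<close> unfolding locally_close_def dist_real_def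
      by (smt (verit, best) field_sum_of_halves)
    then have "\<bar>w i\<bar> * \<bar>h (f y) - h (g y)\<bar> \<le> (\<bar>K\<bar> + 1) * (\<epsilon> / (\<bar>K\<bar> + 1))"
      using w[OF \<open>i \<in> I\<close>] by (intro mult_mono) auto
    then show "\<bar>w i * h (f y) - w i * h (g y)\<bar> \<le> \<epsilon>"
      by (simp add: abs_mult right_diff_distrib[symmetric])
  qed
  then show "\<exists>N. \<exists>\<delta>>0. \<forall>i\<in>I. \<forall>f\<in>{f. \<forall>y. f y \<in> J}. \<forall>g\<in>{f. \<forall>y. f y \<in> J}.
      locally_close N \<delta> f g \<longrightarrow> locally_close M \<epsilon> (\<lambda>y. w i * h (f y)) (\<lambda>y. w i * h (g y))"
    using \<open>d > 0\<close> by (intro exI[of _ M] exI[of _ "d/2"]) auto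
qed

lemma inverse_square_le:
  fixes c \<epsilon> :: real
  assumes "\<epsilon> > 0"
  obtains R where "R \<ge> 1" "c / R\<^sup>2 \<le> \<epsilon>"
proof -
  define R where "R = \<bar>c\<bar> / \<epsilon> + 1"
  have R: "R \<ge> 1" using assms by (simp add: R_def)
  have "\<bar>c\<bar> \<le> \<epsilon> * R" unfolding R_def using assms by (simp add: distrib_left)
  also have "\<dots> \<le> \<epsilon> * R\<^sup>2" using R assms by (intro mult_left_mono) (auto simp: power2_eq_square)
  finally have "c \<le> \<epsilon> * R\<^sup>2" by linarith
  then have "c / R\<^sup>2 \<le> \<epsilon>" using R by (simp add: divide_le_eq)
  then show ?thesis using that R by blast
qed

text \<open>The heat kernel spreads mass only diffusively: by the second-moment bound in
  \<open>heat_conv_local_bound\<close>, a window of radius \<open>R\<close> leaks at most \<open>O(a B / R^2)\<close>.\<close>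
lemma locally_uniformly_equicontinuous_heat_conv:
  assumes a: "\<And>i. i \<in> I \<Longrightarrow> 0 \<le> a i \<and> a i \<le> V" and c: "\<And>i. i \<in> I \<Longrightarrow> 0 \<le> c i \<and> c i \<le> C"
  shows "locally_uniformly_equicontinuous I (bounded_measurable B) (\<lambda>i f x. c i * heat_conv (a i) f x)"
  unfolding locally_uniformly_equicontinuous_def
proof (intro allI impI)
  fix \<epsilon> :: real and M assume "\<epsilon> > 0"
  define K where "K = \<bar>C\<bar> + 1"
  define \<delta> where "\<delta> = \<epsilon> / (2 * K)"
  have K: "K > 0" and "\<delta> > 0"
    using \<open>\<epsilon> > 0\<close> by (auto simp: K_def \<delta>_def)
  then have K\<delta>: "K * (2 * \<delta>) = \<epsilon>" by (simp add: \<delta>_def)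
  obtain R where R: "R \<ge> 1" and leak: "4 * \<bar>V\<bar> * \<bar>B\<bar> / R\<^sup>2 \<le> \<delta>"
    using inverse_square_le[OF \<open>\<delta> > 0\<close>] by blast
  have "locally_close M \<epsilon> (\<lambda>x. c i * heat_conv (a i) f x) (\<lambda>x. c i * heat_conv (a i) g x)"
    if i: "i \<in> I" and f: "f \<in> bounded_measurable B" and g: "g \<in> bounded_measurable B"
      and close: "locally_close (M + R) \<delta> f g" for i f g
    unfolding locally_close_def
  proof (intro allI impI)
    fix x :: real assume "\<bar>x\<bar> \<le> M"
    have [measurable]: "f \<in> borel_measurable borel" "g \<in> borel_measurable borel"
      and fg: "\<forall>y. \<bar>f y\<bar> \<le> B" "\<forall>y. \<bar>g y\<bar> \<le> B"
      using f g by (auto simp: bounded_measurable_def)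
    have diff: "\<forall>y. \<bar>f y - g y\<bar> \<le> \<bar>2 * B\<bar>"
      using fg by (metis abs_triangle_ineq4 abs_ge_self add_mono mult_2 order_trans)
    have "\<bar>heat_conv (a i) f x - heat_conv (a i) g x\<bar> \<le> \<delta> + 2 * a i * \<bar>2 * B\<bar> / R\<^sup>2"
      using close R \<open>\<bar>x\<bar> \<le> M\<close> unfolding locally_close_def
      by (intro heat_conv_local_bound[OF _ _ _ fg diff]) (use a[OF i] in auto)
    also have "\<dots> \<le> \<delta> + 4 * \<bar>V\<bar> * \<bar>B\<bar> / R\<^sup>2"
      using a[OF i] by (intro add_left_mono divide_right_mono) (auto simp: abs_mult intro!: mult_mono)
    finally have "\<bar>c i\<bar> * \<bar>heat_conv (a i) f x - heat_conv (a i) g x\<bar> \<le> K * (\<delta> + 4 * \<bar>V\<bar> * \<bar>B\<bar> / R\<^sup>2)"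
      using c[OF i] by (intro mult_mono) (auto simp: K_def)
    also have "\<dots> \<le> K * (2 * \<delta>)" using K leak by (intro mult_left_mono) auto
    also have "\<dots> = \<epsilon>" by (rule K\<delta>)
    finally show "\<bar>c i * heat_conv (a i) f x - c i * heat_conv (a i) g x\<bar> \<le> \<epsilon>"
      by (simp add: abs_mult right_diff_distrib[symmetric])
  qed
  then show "\<exists>N. \<exists>\<delta>>0. \<forall>i\<in>I. \<forall>f\<in>bounded_measurable B. \<forall>g\<in>bounded_measurable B.
      locally_close N \<delta> f g \<longrightarrow>
      locally_close M \<epsilon> (\<lambda>x. c i * heat_conv (a i) f x) (\<lambda>x. c i * heat_conv (a i) g x)"
    using \<open>\<delta> > 0\<close> by blast
qed

section \<open>The metric of the compact-open topology\<close>

lemma SUP_abs_interval_le: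
  fixes u :: "real \<Rightarrow> real"
  assumes "\<forall>x. \<bar>x\<bar> \<le> real (Suc n) \<longrightarrow> \<bar>u x\<bar> \<le> \<eta>"
  shows "(SUP x \<in> {- real (Suc n) .. real (Suc n)}. \<bar>u x\<bar>) \<le> \<eta>"
  by (rule cSUP_least) (use assms in auto)

lemma abs_le_SUP_abs_interval:
  fixes u :: "real \<Rightarrow> real"
  assumes "\<forall>x. \<bar>u x\<bar> \<le> B" "\<bar>x\<bar> \<le> real (Suc n)"
  shows "\<bar>u x\<bar> \<le> (SUP x \<in> {- real (Suc n) .. real (Suc n)}. \<bar>u x\<bar>)"
proof (rule cSUP_upper)
  show "x \<in> {- real (Suc n)..real (Suc n)}" using assms(2) by auto
  show "bdd_above ((\<lambda>x. \<bar>u x\<bar>) ` {- real (Suc n)..real (Suc n)})"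
    using assms(1) by (intro bdd_aboveI[of _ B]) auto
qed

lemma SUP_abs_interval_nonneg:
  fixes u :: "real \<Rightarrow> real"
  assumes "\<forall>x. \<bar>u x\<bar> \<le> B"
  shows "0 \<le> (SUP x \<in> {- real (Suc n) .. real (Suc n)}. \<bar>u x\<bar>)"
  using abs_le_SUP_abs_interval[OF assms, of 0 n] by simp

lemma conorm_summable:
  fixes u :: "real \<Rightarrow> real"
  assumes "\<forall>x. \<bar>u x\<bar> \<le> B"
  shows "summable (\<lambda>n. (1/2::real) ^ Suc n * (SUP x \<in> {- real (Suc n) .. real (Suc n)}. \<bar>u x\<bar>))"
proof (rule summable_comparison_test'[where g="\<lambda>n. B * (1/2) ^ Suc n"])
  show "summable (\<lambda>n. B * (1/2::real) ^ Suc n)"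
    by (intro summable_mult) (simp add: summable_geometric)
  fix n
  have "(SUP x \<in> {- real (Suc n) .. real (Suc n)}. \<bar>u x\<bar>) \<le> B"
    by (rule SUP_abs_interval_le) (use assms in auto)
  then show "norm ((1/2::real) ^ Suc n * (SUP x \<in> {- real (Suc n) .. real (Suc n)}. \<bar>u x\<bar>))
      \<le> B * (1/2) ^ Suc n"
    using SUP_abs_interval_nonneg[OF assms, of n] by (simp add: abs_mult mult.commute)
qed

lemma abs_le_conorm:
  assumes B: "\<forall>x. \<bar>u x\<bar> \<le> B" and x: "\<bar>x\<bar> \<le> real (Suc n)"
  shows "\<bar>u x\<bar> \<le> 2 ^ Suc n * conorm u"
proof -
  have "(1/2::real) ^ Suc n * (SUP x \<in> {- real (Suc n) .. real (Suc n)}. \<bar>u x\<bar>) \<le> conorm u"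
    unfolding conorm_def
    using sum_le_suminf[OF conorm_summable[OF B], of "{n}"] SUP_abs_interval_nonneg[OF B] by simp
  then have "(SUP x \<in> {- real (Suc n) .. real (Suc n)}. \<bar>u x\<bar>) \<le> 2 ^ Suc n * conorm u"
    by (simp add: field_simps)
  then show ?thesis using abs_le_SUP_abs_interval[OF B x] by linarith
qed

lemma conorm_less_imp_locally_close:
  assumes B: "\<forall>x. \<bar>f x - g x\<bar> \<le> B" and N: "N \<le> real (Suc n)"
    and small: "conorm (\<lambda>x. f x - g x) < \<delta> / 2 ^ Suc n"
  shows "locally_close N \<delta> f g"
  unfolding locally_close_def
proof (intro allI impI)
  fix y assume "\<bar>y\<bar> \<le> N"
  then have "\<bar>f y - g y\<bar> \<le> 2 ^ Suc n * conorm (\<lambda>x. f x - g x)"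
    using abs_le_conorm[OF B] N by simp
  also have "\<dots> \<le> \<delta>" using small by (simp add: field_simps)
  finally show "\<bar>f y - g y\<bar> \<le> \<delta>" .
qed

text \<open>The weights \<open>2^-n\<close> are split as \<open>(2/3)^n (3/4)^n\<close>: the first factor absorbs the
  tail \<open>n \<ge> K\<close>, the second keeps the series summable.\<close>
lemma conorm_le:
  assumes B: "\<forall>x. \<bar>u x\<bar> \<le> B" and loc: "\<forall>x. \<bar>x\<bar> \<le> real K \<longrightarrow> \<bar>u x\<bar> \<le> \<eta>"
  shows "conorm u \<le> \<eta> + 2 * B * (2/3) ^ K"
proof -
  have B0: "B \<ge> 0" using B by (metis abs_ge_zero order_trans)
  have \<eta>0: "\<eta> \<ge> 0" using loc[rule_format, of 0] by (metis abs_ge_zero abs_zero of_nat_0_le_iff order_trans)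
  let ?f = "\<lambda>n. (1/2::real) ^ Suc n * (SUP x \<in> {- real (Suc n) .. real (Suc n)}. \<bar>u x\<bar>)"
  let ?g = "\<lambda>n. \<eta> * (1/2) * (1/2::real) ^ n + B / 2 * (2/3) ^ K * (3/4::real) ^ n"
  have le: "?f n \<le> ?g n" for n
  proof (cases "Suc n \<le> K")
    case True
    have "(SUP x \<in> {- real (Suc n) .. real (Suc n)}. \<bar>u x\<bar>) \<le> \<eta>"
      by (rule SUP_abs_interval_le) (use loc True in auto)
    then have "?f n \<le> (1/2) ^ Suc n * \<eta>" by (intro mult_left_mono) auto
    moreover have "0 \<le> B / 2 * (2/3) ^ K * (3/4::real) ^ n" using B0 by simp
    ultimately show ?thesis by (simp add: mult_ac add_increasing2)
  next
    case False
    have "(SUP x \<in> {- real (Suc n) .. real (Suc n)}. \<bar>u x\<bar>) \<le> B"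
      by (rule SUP_abs_interval_le) (use B in auto)
    then have f: "?f n \<le> (1/2) ^ Suc n * B" by (intro mult_left_mono) auto
    have "(1/2::real) ^ n = (2/3) ^ n * (3/4) ^ n"
      by (simp add: power_mult_distrib[symmetric])
    also have "\<dots> \<le> (2/3) ^ K * (3/4) ^ n"
      using False by (intro mult_right_mono power_decreasing) auto
    finally have "(1/2::real) ^ Suc n * B \<le> B / 2 * (2/3) ^ K * (3/4::real) ^ n"
      using B0 by (simp add: mult_left_mono mult_ac)
    moreover have "0 \<le> \<eta> * (1/2) * (1/2::real) ^ n" using \<eta>0 by simp
    ultimately show ?thesis using f by linarith
  qed
  have "(\<lambda>n. (1/2::real) ^ n) sums 2" "(\<lambda>n. (3/4::real) ^ n) sums 4"
    using geometric_sums[of "1/2::real"] geometric_sums[of "3/4::real"] by simp_all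
  then have g: "?g sums (\<eta> * (1/2) * 2 + B / 2 * (2/3) ^ K * 4)"
    by (intro sums_add sums_mult)
  have "conorm u \<le> suminf ?g"
    unfolding conorm_def by (rule suminf_le[OF le conorm_summable[OF B] sums_summable[OF g]])
  then show ?thesis using sums_unique[OF g] by simp
qed

section \<open>The operator \<open>Q\<close>\<close>

locale delay_model =
  fixes T ta tb ustar :: real and DM DI dM dI tau p h :: "real \<Rightarrow> real"
  assumes cont_DM: "continuous_on UNIV DM" and cont_DI: "continuous_on UNIV DI"
    and cont_dM: "continuous_on UNIV dM" and cont_dI: "continuous_on UNIV dI"
    and cont_tau: "continuous_on UNIV tau" and cont_p: "continuous_on UNIV p"
    and cont_tau': "continuous_on UNIV (deriv tau)"
    and DM_nonneg: "\<forall>t. DM t \<ge> 0" and DI_nonneg: "\<forall>t. DI t \<ge> 0"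
    and dM_nonneg: "\<forall>t. dM t \<ge> 0" and dI_nonneg: "\<forall>t. dI t \<ge> 0" and p_nonneg: "\<forall>t. p t \<ge> 0"
    and tau'_lt_1: "\<forall>t. deriv tau t < 1"
    and cont_h: "continuous_on {0..} h" and h_nonneg: "\<forall>z \<ge> 0. h z \<ge> 0"
    and h_mono: "mono_on {0..ustar} h"
    and ustar_pos: "ustar > 0" and ta_le_tb: "ta \<le> tb"
    and h_subhomogeneous: "\<forall>z \<ge> 0. \<forall>l \<in> {0<..<1}. h (l * z) \<ge> l * h z"
begin

abbreviation Q :: "(real \<Rightarrow> real) \<Rightarrow> real \<Rightarrow> real" where "Q \<equiv> Qop T DM dM DI dI tau p h ta tb"

definition admissible :: "(real \<Rightarrow> real) \<Rightarrow> bool" where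
  "admissible \<phi> \<longleftrightarrow> \<phi> \<in> borel_measurable borel \<and> (\<forall>y. 0 \<le> \<phi> y \<and> \<phi> y \<le> ustar)"

definition delayed_state :: "real \<Rightarrow> (real \<Rightarrow> real) \<Rightarrow> real \<Rightarrow> real" where
  "delayed_state s \<phi> = kconv DM dM (s - tau s) 0 \<phi>"

definition recruitment :: "real \<Rightarrow> (real \<Rightarrow> real) \<Rightarrow> real \<Rightarrow> real" where
  "recruitment s \<phi> y = p (s - tau s) * h (delayed_state s \<phi> y)"

definition R_delayed :: "real \<Rightarrow> (real \<Rightarrow> real) \<Rightarrow> real \<Rightarrow> real" where
  "R_delayed s \<phi> = Rop DI dI tau p h s (delayed_state s \<phi>)"

definition Q_integrand :: "real \<Rightarrow> (real \<Rightarrow> real) \<Rightarrow> real \<Rightarrow> real" where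
  "Q_integrand s \<phi> = kconv DM dM T s (R_delayed s \<phi>)"

text \<open>\<open>h\<close> is only continuous on \<open>[0, \<infinity>)\<close>; its constant extension to the left is
  continuous everywhere, hence Borel, and agrees with \<open>h\<close> on all nonnegative arguments.\<close>
definition h_ext :: "real \<Rightarrow> real" where
  "h_ext x = h (max 0 x)"

definition h_max :: real where
  "h_max = (SOME M. \<forall>z\<in>{0..ustar}. h z \<le> M)"

lemma measurable_h_ext [measurable]: "h_ext \<in> borel_measurable borel"
proof (rule borel_measurable_continuous_onI)
  have "continuous_on UNIV (\<lambda>x. max 0 x :: real)" by (intro continuous_intros)
  then show "continuous_on UNIV h_ext"
    unfolding h_ext_def by (rule continuous_on_compose2[OF cont_h]) auto
qed

lemma measurable_coefficients [measurable]:
  "DM \<in> borel_measurable borel" "DI \<in> borel_measurable borel"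
  "dM \<in> borel_measurable borel" "dI \<in> borel_measurable borel" "tau \<in> borel_measurable borel"
  "p \<in> borel_measurable borel" "deriv tau \<in> borel_measurable borel"
  using cont_DM cont_DI cont_dM cont_dI cont_tau cont_p cont_tau'
  by (auto intro: borel_measurable_continuous_onI)

lemmas measurable_tint_DM [measurable (raw)] = measurable_case_prod_app[OF measurable_tint[OF cont_DM]]
lemmas measurable_tint_DI [measurable (raw)] = measurable_case_prod_app[OF measurable_tint[OF cont_DI]]
lemmas measurable_tint_dM [measurable (raw)] = measurable_case_prod_app[OF measurable_tint[OF cont_dM]]
lemmas measurable_tint_dI [measurable (raw)] = measurable_case_prod_app[OF measurable_tint[OF cont_dI]]

lemma measurable_kbar [measurable (raw)]:
  assumes [measurable]: "f \<in> borel_measurable M" "g \<in> borel_measurable M"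
  shows "(\<lambda>w. kbar dM (f w) (g w)) \<in> borel_measurable M" "(\<lambda>w. kbar dI (f w) (g w)) \<in> borel_measurable M"
  unfolding kbar_def by measurable

lemma tint_DM_nonneg [simp]: "0 \<le> tint DM u v" and tint_DI_nonneg [simp]: "0 \<le> tint DI u v"
  using tint_nonneg[OF DM_nonneg] tint_nonneg[OF DI_nonneg] by auto

lemma kbar_dM_bounds [simp]: "0 \<le> kbar dM t s" "kbar dM t s \<le> 1"
  and kbar_dI_bounds [simp]: "0 \<le> kbar dI t s" "kbar dI t s \<le> 1"
  by (simp_all add: less_imp_le[OF kbar_pos] kbar_le_1 dM_nonneg dI_nonneg)

lemma tau'_le_1 [simp]: "deriv tau s \<le> 1"
  using tau'_lt_1 by (simp add: less_imp_le)

lemma one_minus_tau'_nonneg [simp]: "0 \<le> 1 - deriv tau s"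
  by simp

lemma h_le_h_max: "z \<in> {0..ustar} \<Longrightarrow> h z \<le> h_max"
proof -
  have "compact (h ` {0..ustar})"
    by (rule compact_continuous_image) (rule continuous_on_subset[OF cont_h], auto)
  then obtain M where "\<forall>w\<in>h ` {0..ustar}. norm w \<le> M"
    using compact_imp_bounded bounded_iff by metis
  then have "\<exists>M. \<forall>z\<in>{0..ustar}. h z \<le> M"
    by (intro exI[of _ M]) (auto dest: abs_le_D1)
  then have "\<forall>z\<in>{0..ustar}. h z \<le> h_max"
    unfolding h_max_def by (rule someI_ex)
  then show "z \<in> {0..ustar} \<Longrightarrow> h z \<le> h_max" by blast
qed

lemma h_max_nonneg: "h_max \<ge> 0"
  using h_le_h_max[of 0] h_nonneg ustar_pos by fastforce

lemma admissible_measurable: "admissible \<phi> \<Longrightarrow> \<phi> \<in> borel_measurable borel"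
  unfolding admissible_def by simp

lemma admissible_bounded_measurable: "admissible \<phi> \<Longrightarrow> \<phi> \<in> bounded_measurable ustar"
  unfolding admissible_def bounded_measurable_def by auto

lemma delayed_state_eq:
  "delayed_state s \<phi> y = kbar dM (s - tau s) 0 * heat_conv (tint DM 0 (s - tau s)) \<phi> y"
  unfolding delayed_state_def by (rule kconv_eq_heat_conv[OF DM_nonneg])

lemma recruitment_eq_h_ext:
  "admissible \<phi> \<Longrightarrow> recruitment s \<phi> y = p (s - tau s) * h_ext (delayed_state s \<phi> y)"
  unfolding recruitment_def h_ext_def delayed_state_eq admissible_def
  using cmult_heat_conv_range[of "tint DM 0 (s - tau s)" "kbar dM (s - tau s) 0" \<phi> ustar]
  by (simp add: max_def)

lemma R_delayed_eq: "R_delayed s \<phi> y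
    = (1 - deriv tau s) * kbar dI s (s - tau s) * heat_conv (tint DI (s - tau s) s) (recruitment s \<phi>) y"
  unfolding R_delayed_def Rop_def kconv_eq_heat_conv[OF DI_nonneg] recruitment_def[abs_def] by simp

lemma Q_integrand_eq: "Q_integrand s \<phi> x = kbar dM T s * heat_conv (tint DM s T) (R_delayed s \<phi>) x"
  unfolding Q_integrand_def by (rule kconv_eq_heat_conv[OF DM_nonneg])

lemma Q_eq: "Q \<phi> x = kconv DM dM T 0 \<phi> x + integral {ta..tb} (\<lambda>s. Q_integrand s \<phi> x)"
  unfolding Qop_def Q_integrand_def R_delayed_def delayed_state_def ..

lemma delayed_state_range: "admissible \<phi> \<Longrightarrow> 0 \<le> delayed_state s \<phi> y \<and> delayed_state s \<phi> y \<le> ustar"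
  unfolding delayed_state_eq admissible_def by (intro cmult_heat_conv_range) auto

lemma measurable_delayed_state [measurable]:
  assumes "admissible \<phi>"
  shows "(\<lambda>(s, y). delayed_state s \<phi> y) \<in> borel_measurable (borel \<Otimes>\<^sub>M borel)"
proof -
  note [measurable] = admissible_measurable[OF assms]
  have [measurable]: "(\<lambda>(s, y). heat_conv (tint DM 0 (s - tau s)) ((\<lambda>s y. \<phi> y) s) y)
      \<in> borel_measurable (borel \<Otimes>\<^sub>M borel)"
    using assms unfolding admissible_def
    by (intro measurable_heat_conv_param) (measurable, auto intro!: exI[of _ ustar])
  show ?thesis unfolding delayed_state_eq by measurable
qed

lemma delayed_state_admissible: "admissible \<phi> \<Longrightarrow> admissible (delayed_state s \<phi>)"
  using delayed_state_range measurable_slice[OF measurable_delayed_state]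
  unfolding admissible_def by blast

lemma recruitment_range:
  "admissible \<phi> \<Longrightarrow> 0 \<le> recruitment s \<phi> y \<and> recruitment s \<phi> y \<le> p (s - tau s) * h_max"
  unfolding recruitment_def
  using delayed_state_range[of \<phi> s y] h_nonneg h_le_h_max p_nonneg by (auto intro: mult_left_mono)

lemma measurable_recruitment [measurable]:
  assumes "admissible \<phi>"
  shows "(\<lambda>(s, y). recruitment s \<phi> y) \<in> borel_measurable (borel \<Otimes>\<^sub>M borel)"
proof -
  have [measurable]: "(\<lambda>w. delayed_state (fst w) \<phi> (snd w)) \<in> borel_measurable (borel \<Otimes>\<^sub>M borel)"
    using measurable_delayed_state[OF assms] by (simp add: case_prod_beta')
  have "(\<lambda>w. p (fst w - tau (fst w)) * h_ext (delayed_state (fst w) \<phi> (snd w)))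
      \<in> borel_measurable (borel \<Otimes>\<^sub>M borel)"
    by measurable
  then show ?thesis using recruitment_eq_h_ext[OF assms] by (simp add: case_prod_beta')
qed

lemma recruitment_bounded_measurable:
  "admissible \<phi> \<Longrightarrow> recruitment s \<phi> \<in> bounded_measurable (p (s - tau s) * h_max)"
  using recruitment_range measurable_slice[OF measurable_recruitment]
  unfolding bounded_measurable_def by fastforce

lemma R_delayed_range: "admissible \<phi> \<Longrightarrow>
    0 \<le> R_delayed s \<phi> y \<and> R_delayed s \<phi> y \<le> (1 - deriv tau s) * (p (s - tau s) * h_max)"
proof -
  assume \<phi>: "admissible \<phi>"
  have "0 \<le> kbar dI s (s - tau s) * heat_conv (tint DI (s - tau s) s) (recruitment s \<phi>) y
      \<and> kbar dI s (s - tau s) * heat_conv (tint DI (s - tau s) s) (recruitment s \<phi>) y \<le> p (s - tau s) * h_max"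
    using recruitment_range[OF \<phi>] measurable_slice[OF measurable_recruitment[OF \<phi>]]
    by (intro cmult_heat_conv_range) auto
  then show ?thesis
    unfolding R_delayed_eq mult.assoc by (meson mult_left_mono mult_nonneg_nonneg one_minus_tau'_nonneg)
qed

lemma measurable_R_delayed [measurable]:
  assumes "admissible \<phi>"
  shows "(\<lambda>(s, y). R_delayed s \<phi> y) \<in> borel_measurable (borel \<Otimes>\<^sub>M borel)"
proof -
  have [measurable]: "(\<lambda>(s, y). heat_conv (tint DI (s - tau s) s) (recruitment s \<phi>) y)
      \<in> borel_measurable (borel \<Otimes>\<^sub>M borel)"
    using recruitment_range[OF assms] 
    by (intro measurable_heat_conv_param[OF _ _ measurable_recruitment[OF assms]])
      (auto intro: abs_of_nonneg)
  show ?thesis unfolding R_delayed_eq by measurable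
qed

lemma R_delayed_bounded_measurable: "admissible \<phi> \<Longrightarrow>
    R_delayed s \<phi> \<in> bounded_measurable ((1 - deriv tau s) * (p (s - tau s) * h_max))"
  using R_delayed_range measurable_slice[OF measurable_R_delayed]
  unfolding bounded_measurable_def by fastforce

lemma Q_integrand_range: "admissible \<phi> \<Longrightarrow>
    0 \<le> Q_integrand s \<phi> x \<and> Q_integrand s \<phi> x \<le> (1 - deriv tau s) * (p (s - tau s) * h_max)"
  unfolding Q_integrand_eq
  using R_delayed_range measurable_slice[OF measurable_R_delayed]
  by (intro cmult_heat_conv_range) auto

lemma measurable_Q_integrand [measurable]:
  assumes "admissible \<phi>"
  shows "(\<lambda>(s, x). Q_integrand s \<phi> x) \<in> borel_measurable (borel \<Otimes>\<^sub>M borel)"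
proof -
  have [measurable]: "(\<lambda>(s, x). heat_conv (tint DM s T) (R_delayed s \<phi>) x)
      \<in> borel_measurable (borel \<Otimes>\<^sub>M borel)"
    using R_delayed_range[OF assms]
    by (intro measurable_heat_conv_param[OF _ _ measurable_R_delayed[OF assms]])
      (auto intro: abs_of_nonneg)
  show ?thesis unfolding Q_integrand_eq by measurable
qed

definition coeff_bound :: real where
  "coeff_bound = (SOME K. \<forall>s\<in>{ta..tb}.
     \<bar>1 - deriv tau s\<bar> \<le> K \<and> \<bar>p (s - tau s)\<bar> \<le> K \<and> \<bar>s - tau s\<bar> \<le> K \<and> \<bar>s\<bar> \<le> K)"

lemma abs_le_coeff_bound: "s \<in> {ta..tb} \<Longrightarrow>
    \<bar>1 - deriv tau s\<bar> \<le> coeff_bound \<and> \<bar>p (s - tau s)\<bar> \<le> coeff_bound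
    \<and> \<bar>s - tau s\<bar> \<le> coeff_bound \<and> \<bar>s\<bar> \<le> coeff_bound"
proof -
  have c: "continuous_on UNIV (\<lambda>s. s - tau s)" using cont_tau by (intro continuous_intros)
  have "continuous_on UNIV (\<lambda>s. 1 - deriv tau s)" "continuous_on UNIV (\<lambda>s. p (s - tau s))"
    "continuous_on UNIV (\<lambda>s::real. s)"
    using cont_tau' continuous_on_compose2[OF cont_p c] by (auto intro: continuous_intros)
  then obtain K1 K2 K3 K4 where "\<forall>s\<in>{ta..tb}. \<bar>1 - deriv tau s\<bar> \<le> K1"
    "\<forall>s\<in>{ta..tb}. \<bar>p (s - tau s)\<bar> \<le> K2" "\<forall>s\<in>{ta..tb}. \<bar>s - tau s\<bar> \<le> K3" "\<forall>s\<in>{ta..tb}. \<bar>s\<bar> \<le> K4"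
    using continuous_bounded_Icc[of _ ta tb] c by (metis (no_types, lifting))
  then have "\<exists>K. \<forall>s\<in>{ta..tb}.
      \<bar>1 - deriv tau s\<bar> \<le> K \<and> \<bar>p (s - tau s)\<bar> \<le> K \<and> \<bar>s - tau s\<bar> \<le> K \<and> \<bar>s\<bar> \<le> K"
    by (intro exI[of _ "max (max K1 K2) (max K3 K4)"]) (auto simp: le_max_iff_disj)
  from someI_ex[OF this] show "s \<in> {ta..tb} \<Longrightarrow> ?thesis"
    unfolding coeff_bound_def by blast
qed

lemma coeff_bound_nonneg: "coeff_bound \<ge> 0"
  using abs_le_coeff_bound[of ta] ta_le_tb by fastforce

definition integrand_bound :: real where
  "integrand_bound = coeff_bound * (coeff_bound * h_max)"

lemma R_delayed_bound_le_integrand_bound: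
  "s \<in> {ta..tb} \<Longrightarrow> (1 - deriv tau s) * (p (s - tau s) * h_max) \<le> integrand_bound"
  unfolding integrand_bound_def using abs_le_coeff_bound coeff_bound_nonneg h_max_nonneg p_nonneg
  by (intro mult_mono) (auto dest: abs_le_D1)

lemma Q_integrand_integrable:
  assumes "admissible \<phi>"
  shows "(\<lambda>s. Q_integrand s \<phi> x) integrable_on {ta..tb}"
proof (rule bounded_measurable_integrable_on)
  show "(\<lambda>s. Q_integrand s \<phi> x) \<in> borel_measurable borel"
    using measurable_Pair1[OF measurable_Q_integrand[OF assms], of x] by simp
  show "\<forall>s\<in>{ta..tb}. \<bar>Q_integrand s \<phi> x\<bar> \<le> integrand_bound"
    using Q_integrand_range[OF assms] R_delayed_bound_le_integrand_bound by (metis abs_of_nonneg order_trans)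
qed

lemma delayed_state_mono:
  "admissible \<phi> \<Longrightarrow> admissible \<psi> \<Longrightarrow> \<forall>y. \<phi> y \<le> \<psi> y \<Longrightarrow> delayed_state s \<phi> y \<le> delayed_state s \<psi> y"
  unfolding delayed_state_eq admissible_def by (rule cmult_heat_conv_mono[where B=ustar]) auto

lemma Q_integrand_mono:
  assumes \<phi>: "admissible \<phi>" and \<psi>: "admissible \<psi>" and le: "\<forall>y. \<phi> y \<le> \<psi> y"
  shows "Q_integrand s \<phi> x \<le> Q_integrand s \<psi> x"
proof -
  have "recruitment s \<phi> y \<le> recruitment s \<psi> y" for y
    using h_mono delayed_state_range[OF \<phi>, of s y] delayed_state_range[OF \<psi>, of s y]
      delayed_state_mono[OF \<phi> \<psi> le, of s y] p_nonneg
    unfolding recruitment_def by (auto simp: mono_on_def intro: mult_left_mono)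
  then have "R_delayed s \<phi> y \<le> R_delayed s \<psi> y" for y
    unfolding R_delayed_eq mult.assoc[symmetric]
    using bounded_measurableD[OF recruitment_bounded_measurable[OF \<phi>]]
      bounded_measurableD[OF recruitment_bounded_measurable[OF \<psi>]]
    by (intro cmult_heat_conv_mono mult_nonneg_nonneg) auto
  then show ?thesis unfolding Q_integrand_eq
    using bounded_measurableD[OF R_delayed_bounded_measurable[OF \<phi>]]
      bounded_measurableD[OF R_delayed_bounded_measurable[OF \<psi>]]
    by (intro cmult_heat_conv_mono) auto
qed

lemma Q_mono:
  assumes \<phi>: "admissible \<phi>" and \<psi>: "admissible \<psi>" and le: "\<forall>y. \<phi> y \<le> \<psi> y"
  shows "Q \<phi> x \<le> Q \<psi> x"
proof -
  have "kconv DM dM T 0 \<phi> x \<le> kconv DM dM T 0 \<psi> x"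
    unfolding kconv_eq_heat_conv[OF DM_nonneg] using \<phi> \<psi> le unfolding admissible_def
    by (intro cmult_heat_conv_mono[where B=ustar]) auto
  moreover have "integral {ta..tb} (\<lambda>s. Q_integrand s \<phi> x) \<le> integral {ta..tb} (\<lambda>s. Q_integrand s \<psi> x)"
    using Q_integrand_integrable[OF \<phi>] Q_integrand_integrable[OF \<psi>] Q_integrand_mono[OF \<phi> \<psi> le]
    by (rule integral_le)
  ultimately show ?thesis unfolding Q_eq by simp
qed

lemma admissible_cmult: "admissible \<phi> \<Longrightarrow> l \<in> {0<..<1} \<Longrightarrow> admissible (\<lambda>y. l * \<phi> y)"
  unfolding admissible_def
  by (auto simp: mult_le_one mult_nonneg_nonneg intro: order_trans[OF mult_left_le_one_le])

lemma bounded_measurable_cmult: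
  "f \<in> bounded_measurable B \<Longrightarrow> l \<in> {0<..<1} \<Longrightarrow> (\<lambda>y. l * f y) \<in> bounded_measurable B"
  unfolding bounded_measurable_def
  by (auto simp: abs_mult) (meson abs_ge_zero less_imp_le mult_left_le_one_le order_trans)

text \<open>The subhomogeneity of \<open>h\<close> passes through the linear, positivity preserving layers.\<close>
lemma Q_integrand_cmult:
  assumes \<phi>: "admissible \<phi>" and l: "l \<in> {0<..<1}"
  shows "l * Q_integrand s \<phi> x \<le> Q_integrand s (\<lambda>y. l * \<phi> y) x"
proof -
  have l\<phi>: "admissible (\<lambda>y. l * \<phi> y)" by (rule admissible_cmult[OF \<phi> l])
  have "l * recruitment s \<phi> y \<le> recruitment s (\<lambda>y. l * \<phi> y) y" for y
  proof -
    have "l * h (delayed_state s \<phi> y) \<le> h (l * delayed_state s \<phi> y)"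
      using h_subhomogeneous delayed_state_range[OF \<phi>, of s y] l by auto
    then show ?thesis
      unfolding recruitment_def delayed_state_eq heat_conv_cmult using p_nonneg
      by (metis mult.left_commute mult_left_mono)
  qed
  then have "l * R_delayed s \<phi> y \<le> R_delayed s (\<lambda>y. l * \<phi> y) y" for y
  proof -
    have "l * R_delayed s \<phi> y = (1 - deriv tau s) * kbar dI s (s - tau s)
        * heat_conv (tint DI (s - tau s) s) (\<lambda>y. l * recruitment s \<phi> y) y"
      unfolding R_delayed_eq heat_conv_cmult by simp
    also have "\<dots> \<le> R_delayed s (\<lambda>y. l * \<phi> y) y"
      unfolding R_delayed_eq
      using \<open>\<And>y. l * recruitment s \<phi> y \<le> recruitment s (\<lambda>y. l * \<phi> y) y\<close>
        bounded_measurableD[OF bounded_measurable_cmult[OF recruitment_bounded_measurable[OF \<phi>] l]]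
        bounded_measurableD[OF recruitment_bounded_measurable[OF l\<phi>]]
      by (intro cmult_heat_conv_mono mult_nonneg_nonneg) auto
    finally show ?thesis .
  qed
  then have "kbar dM T s * heat_conv (tint DM s T) (\<lambda>y. l * R_delayed s \<phi> y) x
      \<le> Q_integrand s (\<lambda>y. l * \<phi> y) x"
    unfolding Q_integrand_eq
    using bounded_measurableD[OF bounded_measurable_cmult[OF R_delayed_bounded_measurable[OF \<phi>] l]]
      bounded_measurableD[OF R_delayed_bounded_measurable[OF l\<phi>]]
    by (intro cmult_heat_conv_mono) auto
  then show ?thesis unfolding Q_integrand_eq heat_conv_cmult by (simp add: mult.left_commute)
qed

lemma Q_cmult:
  assumes \<phi>: "admissible \<phi>" and l: "l \<in> {0<..<1}"
  shows "l * Q \<phi> x \<le> Q (\<lambda>y. l * \<phi> y) x"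
proof -
  have "l * integral {ta..tb} (\<lambda>s. Q_integrand s \<phi> x) = integral {ta..tb} (\<lambda>s. l * Q_integrand s \<phi> x)"
    using Q_integrand_integrable[OF \<phi>] by (rule integral_mult)
  also have "\<dots> \<le> integral {ta..tb} (\<lambda>s. Q_integrand s (\<lambda>y. l * \<phi> y) x)"
    using integrable_on_cmult_left[OF Q_integrand_integrable[OF \<phi>], of l]
      Q_integrand_integrable[OF admissible_cmult[OF \<phi> l]] Q_integrand_cmult[OF \<phi> l]
    by (intro integral_le) auto
  finally show ?thesis
    unfolding Q_eq kconv_eq_heat_conv[OF DM_nonneg] heat_conv_cmult by (simp add: distrib_left)
qed

lemma admissible_translate: "admissible \<phi> \<Longrightarrow> admissible (translate c \<phi>)"
  unfolding admissible_def translate_def by auto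

lemma Q_integrand_translate:
  assumes \<phi>: "admissible \<phi>"
  shows "Q_integrand s (translate c \<phi>) x = Q_integrand s \<phi> (x - c)"
proof -
  have "delayed_state s (translate c \<phi>) y = delayed_state s \<phi> (y - c)" for y
    using \<phi> unfolding delayed_state_eq translate_def admissible_def
    by (subst heat_conv_shift[where B=ustar]) auto
  then have recruitment: "recruitment s (translate c \<phi>) = (\<lambda>y. recruitment s \<phi> (y - c))"
    unfolding recruitment_def by simp
  have R_delayed: "R_delayed s (translate c \<phi>) = (\<lambda>y. R_delayed s \<phi> (y - c))"
  proof
    fix y show "R_delayed s (translate c \<phi>) y = R_delayed s \<phi> (y - c)"
      unfolding R_delayed_eq recruitment using bounded_measurableD[OF recruitment_bounded_measurable[OF \<phi>]]
      by (subst heat_conv_shift) auto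
  qed
  show ?thesis
    unfolding Q_integrand_eq R_delayed using bounded_measurableD[OF R_delayed_bounded_measurable[OF \<phi>]]
    by (subst heat_conv_shift) auto
qed

lemma Q_translate:
  assumes \<phi>: "admissible \<phi>"
  shows "Q (translate c \<phi>) = translate c (Q \<phi>)"
proof
  fix x
  have "kconv DM dM T 0 (translate c \<phi>) x = kconv DM dM T 0 \<phi> (x - c)"
    using \<phi> unfolding kconv_eq_heat_conv[OF DM_nonneg] translate_def admissible_def
    by (subst heat_conv_shift[where B=ustar]) auto
  then show "Q (translate c \<phi>) x = translate c (Q \<phi>) x"
    unfolding Q_eq translate_def[of c "Q \<phi>"] Q_integrand_translate[OF \<phi>] by simp
qed

lemma Q_const: "Q (\<lambda>_. \<gamma>) x = Qbar T dM DI dI tau p h ta tb \<gamma>"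
proof -
  have "R_delayed s (\<lambda>_. \<gamma>) = (\<lambda>_. Rop DI dI tau p h s (\<lambda>_. \<gamma> * kbar dM (s - tau s) 0) 0)" for s
    unfolding R_delayed_def delayed_state_eq[abs_def] Rop_def kconv_eq_heat_conv[OF DI_nonneg]
    by (simp add: heat_conv_const mult.commute)
  then show ?thesis
    unfolding Q_eq Q_integrand_eq Qbar_def kconv_eq_heat_conv[OF DM_nonneg]
    by (simp add: heat_conv_const mult.commute)
qed

definition diffusion_bound :: real where
  "diffusion_bound = (let K = max coeff_bound \<bar>T\<bar> in tint DM (- K) K + tint DI (- K) K)"

lemma tint_le_diffusion_bound:
  assumes s: "s \<in> {ta..tb}"
  shows "tint DM 0 (s - tau s) \<le> diffusion_bound" "tint DI (s - tau s) s \<le> diffusion_bound"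
    "tint DM s T \<le> diffusion_bound"
proof -
  define K where "K = max coeff_bound \<bar>T\<bar>"
  have K: "\<bar>s - tau s\<bar> \<le> K" "\<bar>s\<bar> \<le> K" "\<bar>T\<bar> \<le> K" "0 \<le> K"
    using abs_le_coeff_bound[OF s] unfolding K_def by auto
  then have "tint DM 0 (s - tau s) \<le> tint DM (- K) K" "tint DI (s - tau s) s \<le> tint DI (- K) K"
    "tint DM s T \<le> tint DM (- K) K"
    by (intro tint_mono cont_DM cont_DI DM_nonneg DI_nonneg; auto)+
  then show "tint DM 0 (s - tau s) \<le> diffusion_bound" "tint DI (s - tau s) s \<le> diffusion_bound"
    "tint DM s T \<le> diffusion_bound"
    unfolding diffusion_bound_def K_def[symmetric] Let_def by (simp_all add: add_increasing add_increasing2)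
qed

lemma delayed_state_equicontinuous:
  "locally_uniformly_equicontinuous {ta..tb} (Collect admissible) delayed_state"
proof -
  have "locally_uniformly_equicontinuous {ta..tb} (bounded_measurable ustar)
      (\<lambda>s \<phi> y. kbar dM (s - tau s) 0 * heat_conv (tint DM 0 (s - tau s)) \<phi> y)"
    by (rule locally_uniformly_equicontinuous_heat_conv[where a="\<lambda>s. tint DM 0 (s - tau s)"
          and c="\<lambda>s. kbar dM (s - tau s) 0" and C=1 and V=diffusion_bound])
      (simp_all add: tint_le_diffusion_bound(1))
  then have "locally_uniformly_equicontinuous {ta..tb} (Collect admissible)
      (\<lambda>s \<phi> y. kbar dM (s - tau s) 0 * heat_conv (tint DM 0 (s - tau s)) \<phi> y)"
    by (rule locally_uniformly_equicontinuous_subset) (use admissible_bounded_measurable in blast)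
  then show ?thesis
    by (rule locally_uniformly_equicontinuous_cong) (simp add: fun_eq_iff delayed_state_eq)
qed

lemma recruitment_equicontinuous:
  "locally_uniformly_equicontinuous {ta..tb} (Collect admissible) recruitment"
proof -
  have "uniformly_continuous_on {0..ustar} h"
    by (rule compact_uniformly_continuous) (auto intro: continuous_on_subset[OF cont_h])
  then have "locally_uniformly_equicontinuous {ta..tb} {f. \<forall>y. f y \<in> {0..ustar}}
      (\<lambda>s f y. p (s - tau s) * h (f y))"
    by (rule locally_uniformly_equicontinuous_pointwise) (use abs_le_coeff_bound in blast)
  then have "locally_uniformly_equicontinuous {ta..tb} (Collect admissible)
      (\<lambda>s f y. p (s - tau s) * h (f y))"
    by (rule locally_uniformly_equicontinuous_subset) (auto simp: admissible_def)
  then have "locally_uniformly_equicontinuous {ta..tb} (Collect admissible)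
      (\<lambda>s \<phi> y. p (s - tau s) * h (delayed_state s \<phi> y))"
    using locally_uniformly_equicontinuous_compose[OF delayed_state_equicontinuous]
      delayed_state_admissible by blast
  then show ?thesis
    by (rule locally_uniformly_equicontinuous_cong) (simp add: fun_eq_iff recruitment_def)
qed

lemma R_delayed_equicontinuous:
  "locally_uniformly_equicontinuous {ta..tb} (Collect admissible) R_delayed"
proof -
  have coeff: "(1 - deriv tau s) * kbar dI s (s - tau s) \<le> coeff_bound" if "s \<in> {ta..tb}" for s
  proof -
    have "(1 - deriv tau s) * kbar dI s (s - tau s) \<le> 1 - deriv tau s"
      using mult_left_mono[OF kbar_dI_bounds(2) one_minus_tau'_nonneg] by simp
    then show ?thesis using abs_le_coeff_bound[OF that] abs_ge_self[of "1 - deriv tau s"] by linarith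
  qed
  have "recruitment s \<phi> \<in> bounded_measurable (coeff_bound * h_max)"
    if "s \<in> {ta..tb}" "admissible \<phi>" for s \<phi>
  proof -
    have "p (s - tau s) * h_max \<le> coeff_bound * h_max"
      using abs_le_coeff_bound[OF that(1)] h_max_nonneg by (intro mult_right_mono) auto
    then show ?thesis
      using recruitment_bounded_measurable[OF that(2)] bounded_measurable_mono by blast
  qed
  moreover have "locally_uniformly_equicontinuous {ta..tb} (bounded_measurable (coeff_bound * h_max))
      (\<lambda>s f y. (1 - deriv tau s) * kbar dI s (s - tau s) * heat_conv (tint DI (s - tau s) s) f y)"
    by (rule locally_uniformly_equicontinuous_heat_conv[where a="\<lambda>s. tint DI (s - tau s) s"
          and c="\<lambda>s. (1 - deriv tau s) * kbar dI s (s - tau s)" and C=coeff_bound and V=diffusion_bound])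
      (simp_all add: tint_le_diffusion_bound(2) coeff)
  ultimately have "locally_uniformly_equicontinuous {ta..tb} (Collect admissible)
      (\<lambda>s \<phi> y. (1 - deriv tau s) * kbar dI s (s - tau s)
          * heat_conv (tint DI (s - tau s) s) (recruitment s \<phi>) y)"
    using locally_uniformly_equicontinuous_compose[OF recruitment_equicontinuous] by blast
  then show ?thesis
    by (rule locally_uniformly_equicontinuous_cong) (simp add: fun_eq_iff R_delayed_eq)
qed

lemma Q_integrand_equicontinuous:
  "locally_uniformly_equicontinuous {ta..tb} (Collect admissible) Q_integrand"
proof -
  have "R_delayed s \<phi> \<in> bounded_measurable integrand_bound"
    if "s \<in> {ta..tb}" "admissible \<phi>" for s \<phi>
    using R_delayed_bounded_measurable[OF that(2)] R_delayed_bound_le_integrand_bound[OF that(1)]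
      bounded_measurable_mono by blast
  moreover have "locally_uniformly_equicontinuous {ta..tb} (bounded_measurable integrand_bound)
      (\<lambda>s f x. kbar dM T s * heat_conv (tint DM s T) f x)"
    by (rule locally_uniformly_equicontinuous_heat_conv[where a="\<lambda>s. tint DM s T"
          and c="\<lambda>s. kbar dM T s" and C=1 and V=diffusion_bound])
      (simp_all add: tint_le_diffusion_bound(3))
  ultimately have "locally_uniformly_equicontinuous {ta..tb} (Collect admissible)
      (\<lambda>s \<phi> x. kbar dM T s * heat_conv (tint DM s T) (R_delayed s \<phi>) x)"
    using locally_uniformly_equicontinuous_compose[OF R_delayed_equicontinuous] by blast
  then show ?thesis
    by (rule locally_uniformly_equicontinuous_cong) (simp add: fun_eq_iff Q_integrand_eq)
qed

lemma Q_equicontinuous: "locally_uniformly_equicontinuous I (Collect admissible) (\<lambda>_. Q)"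
proof -
  have "locally_uniformly_equicontinuous I (bounded_measurable ustar)
      (\<lambda>_ \<phi> x. kbar dM T 0 * heat_conv (tint DM 0 T) \<phi> x)"
    by (rule locally_uniformly_equicontinuous_heat_conv[where a="\<lambda>_. tint DM 0 T"
          and c="\<lambda>_. kbar dM T 0" and C=1 and V="tint DM 0 T"]) simp_all
  then have "locally_uniformly_equicontinuous I (Collect admissible)
      (\<lambda>_ \<phi> x. kbar dM T 0 * heat_conv (tint DM 0 T) \<phi> x)"
    by (rule locally_uniformly_equicontinuous_subset) (use admissible_bounded_measurable in blast)
  moreover have "locally_uniformly_equicontinuous I (Collect admissible)
      (\<lambda>_ \<phi> x. integral {ta..tb} (\<lambda>s. Q_integrand s \<phi> x))"
    by (rule locally_uniformly_equicontinuous_integral[OF Q_integrand_equicontinuous])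
      (simp add: Q_integrand_integrable)
  ultimately have "locally_uniformly_equicontinuous I (Collect admissible)
      (\<lambda>_ \<phi> x. kbar dM T 0 * heat_conv (tint DM 0 T) \<phi> x
          + integral {ta..tb} (\<lambda>s. Q_integrand s \<phi> x))"
    by (rule locally_uniformly_equicontinuous_add)
  then show ?thesis
    by (rule locally_uniformly_equicontinuous_cong) (simp add: fun_eq_iff Q_eq kconv_eq_heat_conv[OF DM_nonneg])
qed

lemma admissible_const: "0 \<le> c \<Longrightarrow> c \<le> ustar \<Longrightarrow> admissible (\<lambda>_. c)"
  unfolding admissible_def by auto

lemma Cr_admissible: "\<phi> \<in> Cr ustar \<Longrightarrow> admissible \<phi>"
  unfolding Cr_def admissible_def by (auto intro: borel_measurable_continuous_onI)

lemma Q_locally_close: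
  assumes "\<epsilon> > 0"
  obtains N \<delta> where "\<delta> > 0"
    "\<And>\<phi> \<psi>. admissible \<phi> \<Longrightarrow> admissible \<psi> \<Longrightarrow> locally_close N \<delta> \<phi> \<psi> \<Longrightarrow> locally_close M \<epsilon> (Q \<phi>) (Q \<psi>)"
proof -
  have "\<exists>N. \<exists>\<delta>>0. \<forall>\<phi>\<in>Collect admissible. \<forall>\<psi>\<in>Collect admissible.
      locally_close N \<delta> \<phi> \<psi> \<longrightarrow> locally_close M \<epsilon> (Q \<phi>) (Q \<psi>)"
    using Q_equicontinuous[of "{()}"] assms unfolding locally_uniformly_equicontinuous_def by simp
  then obtain N \<delta> where "\<delta> > 0" and close: "\<forall>\<phi>\<in>Collect admissible. \<forall>\<psi>\<in>Collect admissible.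
      locally_close N \<delta> \<phi> \<psi> \<longrightarrow> locally_close M \<epsilon> (Q \<phi>) (Q \<psi>)"
    by blast
  show ?thesis by (rule that[of \<delta> N, OF \<open>\<delta> > 0\<close>]) (use close in simp)
qed

text \<open>Continuity of \<open>Q \<phi>\<close> follows from translation invariance: \<open>Q \<phi>\<close> at a nearby point
  is \<open>Q\<close> of a translate of \<open>\<phi>\<close>, which is locally close to \<open>\<phi>\<close> by uniform continuity on compacts.\<close>
lemma Q_continuous:
  assumes \<phi>: "\<phi> \<in> Cr ustar"
  shows "continuous_on UNIV (Q \<phi>)"
  unfolding continuous_on_iff
proof (intro ballI allI impI)
  fix x0 :: real and e :: real
  assume "e > 0"
  then have "e / 2 > 0" by simp
  then obtain N \<delta> where "\<delta> > 0" and close: "\<And>\<phi> \<psi>. admissible \<phi> \<Longrightarrow> admissible \<psi> \<Longrightarrow>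
      locally_close N \<delta> \<phi> \<psi> \<Longrightarrow> locally_close \<bar>x0\<bar> (e / 2) (Q \<phi>) (Q \<psi>)"
    using Q_locally_close by metis
  obtain d where "d > 0" and shift: "\<And>c. \<bar>c\<bar> < d \<Longrightarrow> locally_close N \<delta> (translate c \<phi>) \<phi>"
    using continuous_translate_locally_close[OF _ \<open>\<delta> > 0\<close>] \<phi> unfolding Cr_def by blast
  have "dist (Q \<phi> x') (Q \<phi> x0) < e" if "dist x' x0 < d" for x'
  proof -
    have "\<bar>Q (translate (x0 - x') \<phi>) x0 - Q \<phi> x0\<bar> \<le> e / 2"
      using close[OF admissible_translate[OF Cr_admissible[OF \<phi>]] Cr_admissible[OF \<phi>] shift] that
      unfolding locally_close_def by (simp add: dist_real_def abs_minus_commute)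
    then show ?thesis
      using \<open>e > 0\<close> Q_translate[OF Cr_admissible[OF \<phi>]] by (simp add: translate_def dist_real_def)
  qed
  then show "\<exists>d>0. \<forall>x'\<in>UNIV. dist x' x0 < d \<longrightarrow> dist (Q \<phi> x') (Q \<phi> x0) < e"
    using \<open>d > 0\<close> by blast
qed

end

locale delay_model_fixed_point = delay_model +
  assumes h_zero: "h 0 = 0" and Qbar_ustar: "Qbar T dM DI dI tau p h ta tb ustar = ustar"
begin

abbreviation QB :: "real \<Rightarrow> real" where "QB \<equiv> Qbar T dM DI dI tau p h ta tb"

lemma Qbar_zero: "QB 0 = 0"
  unfolding Qbar_def Rop_def kconv_eq_heat_conv[OF DI_nonneg] by (simp add: h_zero heat_conv_const)

text \<open>\<open>0\<close> and \<open>u\<^sup>*\<close> are fixed points, so monotonicity traps \<open>Q\<close> in \<open>[0, u\<^sup>*]\<close>.\<close>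
lemma Q_range: "admissible \<phi> \<Longrightarrow> 0 \<le> Q \<phi> x \<and> Q \<phi> x \<le> ustar"
proof -
  assume \<phi>: "admissible \<phi>"
  have "Q (\<lambda>_. 0) x \<le> Q \<phi> x"
    by (rule Q_mono[OF admissible_const \<phi>]) (use \<phi> ustar_pos in \<open>auto simp: admissible_def\<close>)
  moreover have "Q \<phi> x \<le> Q (\<lambda>_. ustar) x"
    by (rule Q_mono[OF \<phi> admissible_const]) (use \<phi> ustar_pos in \<open>auto simp: admissible_def\<close>)
  ultimately show ?thesis unfolding Q_const Qbar_zero Qbar_ustar by simp
qed

lemma Q_maps_Cr: "\<phi> \<in> Cr ustar \<Longrightarrow> Q \<phi> \<in> Cr ustar"
  using Q_continuous Q_range Cr_admissible unfolding Cr_def by blast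

lemma Qbar_maps_interval: "QB ` {0..ustar} \<subseteq> {0..ustar}"
proof
  fix w assume "w \<in> QB ` {0..ustar}"
  then obtain z where z: "z \<in> {0..ustar}" "w = QB z" by auto
  then have "0 \<le> Q (\<lambda>_. z) 0 \<and> Q (\<lambda>_. z) 0 \<le> ustar"
    by (intro Q_range admissible_const) auto
  then show "w \<in> {0..ustar}" using z unfolding Q_const by auto
qed

lemma Q_conorm_continuous:
  assumes \<phi>: "\<phi> \<in> Cr ustar" and "\<epsilon> > 0"
  shows "\<exists>\<delta>>0. \<forall>\<psi>\<in>Cr ustar. conorm (\<lambda>x. \<psi> x - \<phi> x) < \<delta> \<longrightarrow> conorm (\<lambda>x. Q \<psi> x - Q \<phi> x) < \<epsilon>"
proof -
  obtain K where K: "(2/3::real) ^ K < \<epsilon> / (4 * ustar)"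
    using real_arch_pow_inv[of "\<epsilon> / (4 * ustar)" "2/3"] \<open>\<epsilon> > 0\<close> ustar_pos by auto
  have "\<epsilon> / 4 > 0" using \<open>\<epsilon> > 0\<close> by simp
  then obtain N \<delta> where "\<delta> > 0" and close: "\<And>\<phi> \<psi>. admissible \<phi> \<Longrightarrow> admissible \<psi> \<Longrightarrow>
      locally_close N \<delta> \<phi> \<psi> \<Longrightarrow> locally_close (real K) (\<epsilon> / 4) (Q \<phi>) (Q \<psi>)"
    using Q_locally_close by metis
  define n where "n = nat \<lceil>N\<rceil>"
  have "N \<le> real (Suc n)" unfolding n_def by linarith
  show ?thesis
  proof (intro exI[of _ "\<delta> / 2 ^ Suc n"] conjI ballI impI)
    show "\<delta> / 2 ^ Suc n > 0" using \<open>\<delta> > 0\<close> by simp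
    fix \<psi> assume \<psi>: "\<psi> \<in> Cr ustar" and small: "conorm (\<lambda>x. \<psi> x - \<phi> x) < \<delta> / 2 ^ Suc n"
    have adm: "admissible \<phi>" "admissible \<psi>" using Cr_admissible \<phi> \<psi> by auto
    have B: "\<forall>x. \<bar>\<psi> x - \<phi> x\<bar> \<le> ustar"
    proof
      fix x
      have "0 \<le> \<phi> x" "\<phi> x \<le> ustar" "0 \<le> \<psi> x" "\<psi> x \<le> ustar"
        using adm unfolding admissible_def by auto
      then show "\<bar>\<psi> x - \<phi> x\<bar> \<le> ustar" unfolding abs_le_iff by linarith
    qed
    have "locally_close N \<delta> \<psi> \<phi>"
      by (rule conorm_less_imp_locally_close[OF B \<open>N \<le> real (Suc n)\<close> small])
    then have "\<forall>x. \<bar>x\<bar> \<le> real K \<longrightarrow> \<bar>Q \<psi> x - Q \<phi> x\<bar> \<le> \<epsilon> / 4"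
      using close[OF adm(2,1)] unfolding locally_close_def by blast
    moreover have "\<forall>x. \<bar>Q \<psi> x - Q \<phi> x\<bar> \<le> ustar"
    proof
      fix x show "\<bar>Q \<psi> x - Q \<phi> x\<bar> \<le> ustar"
        using Q_range[OF adm(1), of x] Q_range[OF adm(2), of x] unfolding abs_le_iff by linarith
    qed
    ultimately have "conorm (\<lambda>x. Q \<psi> x - Q \<phi> x) \<le> \<epsilon> / 4 + 2 * ustar * (2/3) ^ K"
      by (intro conorm_le)
    also have "2 * ustar * (2/3) ^ K < 2 * ustar * (\<epsilon> / (4 * ustar))"
      using K ustar_pos by (intro mult_strict_left_mono) auto
    also have "2 * ustar * (\<epsilon> / (4 * ustar)) = \<epsilon> / 2" using ustar_pos by simp
    finally show "conorm (\<lambda>x. Q \<psi> x - Q \<phi> x) < \<epsilon>" using \<open>\<epsilon> > 0\<close> by simp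
  qed
qed

end

section \<open>The restriction of \<open>Q\<close> to constants\<close>

locale delay_model_minimal_fixed_point = delay_model_fixed_point +
  fixes h'0 :: real
  assumes ustar_minimal: "\<forall>z>0. Qbar T dM DI dI tau p h ta tb z = z \<longrightarrow> ustar \<le> z"
    and h_deriv_0: "(h has_real_derivative h'0) (at 0 within {0..})"
    and L_gt_1: "Lnum T dM dI tau p h'0 ta tb > 1"
    and delay_bounds: "\<forall>s\<in>{ta..tb}. 0 \<le> s - tau s \<and> s - tau s \<le> s \<and> s \<le> T"
begin

lemma Qbar_fixed_points: "{z \<in> {0..ustar}. QB z = z} = {0, ustar}"
proof
  show "{z \<in> {0..ustar}. QB z = z} \<subseteq> {0, ustar}"
  proof
    fix z assume z: "z \<in> {z \<in> {0..ustar}. QB z = z}"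
    show "z \<in> {0, ustar}"
    proof (cases "z = 0")
      case False
      then have "ustar \<le> z" using z ustar_minimal by auto
      then show ?thesis using z by auto
    qed simp
  qed
  show "{0, ustar} \<subseteq> {z \<in> {0..ustar}. QB z = z}"
    using Qbar_zero Qbar_ustar ustar_pos by simp
qed

definition Qbar_weight :: "real \<Rightarrow> real" where
  "Qbar_weight s = kbar dM T s * ((1 - deriv tau s) * (kbar dI s (s - tau s) * p (s - tau s)))"

definition survival :: "real \<Rightarrow> real" where
  "survival s = kbar dM (s - tau s) 0"

lemma measurable_Qbar_weight [measurable]: "Qbar_weight \<in> borel_measurable borel"
  unfolding Qbar_weight_def by measurable

lemma measurable_survival [measurable]: "survival \<in> borel_measurable borel"
  unfolding survival_def by measurable

lemma Qbar_weight_nonneg: "Qbar_weight s \<ge> 0"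
  unfolding Qbar_weight_def using p_nonneg by simp

lemma Qbar_weight_le: "s \<in> {ta..tb} \<Longrightarrow> Qbar_weight s \<le> coeff_bound * coeff_bound"
proof -
  assume s: "s \<in> {ta..tb}"
  have "kbar dI s (s - tau s) * p (s - tau s) \<le> 1 * coeff_bound"
    using abs_le_coeff_bound[OF s] p_nonneg by (intro mult_mono) auto
  moreover have "1 - deriv tau s \<le> coeff_bound"
    using abs_le_coeff_bound[OF s] abs_ge_self[of "1 - deriv tau s"] by linarith
  ultimately have inner: "(1 - deriv tau s) * (kbar dI s (s - tau s) * p (s - tau s))
      \<le> coeff_bound * coeff_bound"
    using coeff_bound_nonneg p_nonneg by (intro mult_mono) auto
  have "Qbar_weight s \<le> 1 * (coeff_bound * coeff_bound)"
    unfolding Qbar_weight_def by (rule mult_mono[OF kbar_dM_bounds(2) inner]) (use p_nonneg in auto)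
  then show ?thesis by simp
qed

lemma survival_bounds: "0 < survival s" "survival s \<le> 1"
  unfolding survival_def using kbar_pos by auto

lemma Qbar_eq: "QB z = z * kbar dM T 0 + integral {ta..tb} (\<lambda>s. Qbar_weight s * h (z * survival s))"
proof -
  have "Rop DI dI tau p h s (\<lambda>_. z * kbar dM (s - tau s) 0) 0
      = (1 - deriv tau s) * (kbar dI s (s - tau s) * (p (s - tau s) * h (z * survival s)))" for s
    unfolding Rop_def kconv_eq_heat_conv[OF DI_nonneg] survival_def by (simp add: heat_conv_const)
  then show ?thesis unfolding Qbar_def Qbar_weight_def by (simp add: mult_ac)
qed

lemma Qbar_integrand_integrable:
  assumes z: "z \<in> {0..ustar}"
  shows "(\<lambda>s. Qbar_weight s * h (z * survival s)) integrable_on {ta..tb}"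
proof -
  have range: "z * survival s \<in> {0..ustar}" for s
  proof -
    have "z * survival s \<le> z" using z survival_bounds[of s] by (intro mult_right_le_one_le) auto
    then show ?thesis using z survival_bounds[of s] by simp
  qed
  have h_ext: "h (z * survival s) = h_ext (z * survival s)" for s
    using range[of s] by (simp add: h_ext_def)
  have "(\<lambda>s. Qbar_weight s * h_ext (z * survival s)) integrable_on {ta..tb}"
  proof (rule bounded_measurable_integrable_on)
    show "\<forall>s\<in>{ta..tb}. \<bar>Qbar_weight s * h_ext (z * survival s)\<bar> \<le> coeff_bound * coeff_bound * h_max"
    proof
      fix s assume "s \<in> {ta..tb}"
      have "Qbar_weight s * h (z * survival s) \<le> coeff_bound * coeff_bound * h_max"
        using Qbar_weight_le[OF \<open>s \<in> {ta..tb}\<close>] Qbar_weight_nonneg[of s] h_le_h_max[OF range]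
          h_nonneg range[of s] by (intro mult_mono) auto
      then show "\<bar>Qbar_weight s * h_ext (z * survival s)\<bar> \<le> coeff_bound * coeff_bound * h_max"
        using Qbar_weight_nonneg[of s] h_nonneg range[of s] by (simp add: h_ext[symmetric])
    qed
  qed measurable
  then show ?thesis by (simp add: h_ext)
qed

lemma weight_survival_integrable: "(\<lambda>s. Qbar_weight s * survival s) integrable_on {ta..tb}"
proof (rule bounded_measurable_integrable_on)
  show "\<forall>s\<in>{ta..tb}. \<bar>Qbar_weight s * survival s\<bar> \<le> coeff_bound * coeff_bound"
  proof
    fix s assume s: "s \<in> {ta..tb}"
    have "Qbar_weight s * survival s \<le> Qbar_weight s * 1"
      using survival_bounds[of s] Qbar_weight_nonneg[of s] by (intro mult_left_mono) auto
    then show "\<bar>Qbar_weight s * survival s\<bar> \<le> coeff_bound * coeff_bound"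
      using Qbar_weight_le[OF s] Qbar_weight_nonneg[of s] survival_bounds[of s] by simp
  qed
qed measurable

text \<open>The derivative of \<open>Qbar\<close> at \<open>0\<close> exceeds \<open>1\<close>: this is the meaning of \<open>L > 1\<close>, because
  \<open>kbar(T,s) kbar(s - \<tau>(s), 0) = kbar(T,0) / kbar(s, s - \<tau>(s))\<close>.\<close>
lemma Qbar_derivative_0_gt_1:
  "kbar dM T 0 + h'0 * integral {ta..tb} (\<lambda>s. Qbar_weight s * survival s) > 1"
proof -
  have weight: "h'0 * (Qbar_weight s * survival s)
      = kbar dM T 0 * (dR0 dI tau p h'0 s / kbar dM s (s - tau s))"
    if s: "s \<in> {ta..tb}" for s
  proof -
    have o: "0 \<le> s - tau s" "s - tau s \<le> s" "s \<le> T" using delay_bounds s by auto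
    have "tint dM 0 (s - tau s) + tint dM (s - tau s) s + tint dM s T = tint dM 0 T"
      using tint_add[OF cont_dM o(1,2)] tint_add[OF cont_dM _ o(3), of 0] o by simp
    then have k: "kbar dM T s * kbar dM (s - tau s) 0 = kbar dM T 0 / kbar dM s (s - tau s)"
      unfolding kbar_def by (simp add: exp_add[symmetric] exp_diff[symmetric] algebra_simps)
    have "h'0 * (Qbar_weight s * survival s) = kbar dM T s * kbar dM (s - tau s) 0
        * ((1 - deriv tau s) * kbar dI s (s - tau s) * p (s - tau s) * h'0)"
      by (simp add: Qbar_weight_def survival_def mult_ac)
    also have "\<dots> = kbar dM T 0 * (dR0 dI tau p h'0 s / kbar dM s (s - tau s))"
      unfolding k dR0_def kbar_def[of dI] by simp
    finally show ?thesis .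
  qed
  define I where "I = integral {ta..tb} (\<lambda>s. dR0 dI tau p h'0 s / kbar dM s (s - tau s))"
  have "kbar dM T 0 \<noteq> 1" using L_gt_1 unfolding Lnum_def by auto
  then have kb: "kbar dM T 0 < 1" using kbar_dM_bounds(2)[of T 0] by linarith
  have "kbar dM T 0 / (1 - kbar dM T 0) * I > 1"
    using L_gt_1 unfolding Lnum_def I_def .
  then have "kbar dM T 0 * I > 1 - kbar dM T 0" using kb by (simp add: field_simps)
  moreover have "h'0 * integral {ta..tb} (\<lambda>s. Qbar_weight s * survival s)
      = integral {ta..tb} (\<lambda>s. h'0 * (Qbar_weight s * survival s))"
    by (rule integral_cmul[where c="h'0" and f="\<lambda>s. Qbar_weight s * survival s",
          unfolded real_scaleR_def, symmetric])
  moreover have "\<dots> = integral {ta..tb} (\<lambda>s. kbar dM T 0 * (dR0 dI tau p h'0 s / kbar dM s (s - tau s)))"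
    by (rule integral_cong) (rule weight)
  moreover have "\<dots> = kbar dM T 0 * I"
    unfolding I_def
    by (rule integral_cmul[where c="kbar dM T 0" and f="\<lambda>s. dR0 dI tau p h'0 s / kbar dM s (s - tau s)",
          unfolded real_scaleR_def])
  ultimately show ?thesis by simp
qed

lemma h_lower_linear:
  assumes "\<eta> > 0"
  obtains d where "d > 0" "\<And>y. 0 < y \<Longrightarrow> y < d \<Longrightarrow> (h'0 - \<eta>) * y \<le> h y"
proof -
  have "((\<lambda>y. (h y - h 0) / (y - 0)) \<longlongrightarrow> h'0) (at 0 within {0..})"
    using h_deriv_0 by (simp add: has_field_derivative_iff)
  then have "\<forall>\<^sub>F y in at 0 within {0..}. dist ((h y - h 0) / (y - 0)) h'0 < \<eta>"
    using assms tendstoD by blast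
  then obtain d where "d > 0"
    and d: "\<forall>y\<in>{0..}. y \<noteq> 0 \<and> dist y 0 < d \<longrightarrow> dist ((h y - h 0) / (y - 0)) h'0 < \<eta>"
    unfolding eventually_at by blast
  have "(h'0 - \<eta>) * y \<le> h y" if "0 < y" "y < d" for y
  proof -
    have "h'0 - \<eta> < h y / y"
      using d[rule_format, of y] that h_zero by (auto simp: dist_real_def abs_less_iff)
    then show ?thesis using that by (simp add: field_simps)
  qed
  then show ?thesis using that \<open>d > 0\<close> by blast
qed

lemma Qbar_ge_linear:
  assumes c: "\<And>y. 0 < y \<Longrightarrow> y < d \<Longrightarrow> c * y \<le> h y" and z: "0 < z" "z < d" "z \<le> ustar"
  shows "z * kbar dM T 0 + c * z * integral {ta..tb} (\<lambda>s. Qbar_weight s * survival s) \<le> QB z"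
proof -
  have pointwise: "c * z * (Qbar_weight s * survival s) \<le> Qbar_weight s * h (z * survival s)" for s
  proof -
    have "z * survival s \<le> z"
      using z survival_bounds[of s] by (intro mult_right_le_one_le) auto
    moreover have "0 < z * survival s"
      using z survival_bounds[of s] by simp
    ultimately have "0 < z * survival s" "z * survival s < d"
      using z by linarith+
    from mult_left_mono[OF c[OF this] Qbar_weight_nonneg] show ?thesis by (simp add: mult_ac)
  qed
  have "c * z * integral {ta..tb} (\<lambda>s. Qbar_weight s * survival s)
      = integral {ta..tb} (\<lambda>s. c * z * (Qbar_weight s * survival s))"
    by (rule integral_cmul[where c="c * z" and f="\<lambda>s. Qbar_weight s * survival s",
          unfolded real_scaleR_def, symmetric])
  also have "\<dots> \<le> integral {ta..tb} (\<lambda>s. Qbar_weight s * h (z * survival s))"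
    using pointwise integrable_on_cmult_left[OF weight_survival_integrable, of "c * z"]
      Qbar_integrand_integrable[of z] z
    by (intro integral_le) auto
  finally show ?thesis unfolding Qbar_eq by simp
qed

lemma Qbar_above_diagonal_near_0: obtains d where "d > 0" "\<And>z. 0 < z \<Longrightarrow> z < d \<Longrightarrow> z < QB z"
proof -
  define J where "J = integral {ta..tb} (\<lambda>s. Qbar_weight s * survival s)"
  have J: "J \<ge> 0" unfolding J_def
    using weight_survival_integrable Qbar_weight_nonneg survival_bounds
    by (intro integral_nonneg) (auto intro: mult_nonneg_nonneg less_imp_le)
  define gap where "gap = kbar dM T 0 + h'0 * J - 1"
  have "gap > 0"
    using Qbar_derivative_0_gt_1 unfolding gap_def J_def by simp
  define \<eta> where "\<eta> = gap / (J + 1)"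
  have "\<eta> > 0" "\<eta> * J < gap"
    using \<open>gap > 0\<close> J by (auto simp: \<eta>_def field_simps)
  obtain d where "d > 0" and d: "\<And>y. 0 < y \<Longrightarrow> y < d \<Longrightarrow> (h'0 - \<eta>) * y \<le> h y"
    using h_lower_linear[OF \<open>\<eta> > 0\<close>] by blast
  have "z < QB z" if z: "0 < z" "z < min d ustar" for z
  proof -
    have "z * 1 < z * (kbar dM T 0 + (h'0 - \<eta>) * J)"
      using z \<open>\<eta> * J < gap\<close> unfolding gap_def
      by (intro mult_strict_left_mono) (auto simp: algebra_simps)
    then have "z < z * kbar dM T 0 + (h'0 - \<eta>) * z * J"
      by (simp add: algebra_simps)
    also have "\<dots> \<le> QB z"
      unfolding J_def using Qbar_ge_linear[OF d] z by simp
    finally show ?thesis .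
  qed
  then show ?thesis using that[of "min d ustar"] \<open>d > 0\<close> ustar_pos by simp
qed

lemma Qbar_continuous: "continuous_on {0..ustar} QB"
  unfolding continuous_on_iff
proof (intro ballI allI impI)
  fix z0 e :: real assume z0: "z0 \<in> {0..ustar}" and "e > 0"
  then have "e / 2 > 0" by simp
  then obtain N \<delta> where "\<delta> > 0" and close: "\<And>\<phi> \<psi>. admissible \<phi> \<Longrightarrow> admissible \<psi> \<Longrightarrow>
      locally_close N \<delta> \<phi> \<psi> \<Longrightarrow> locally_close 0 (e / 2) (Q \<phi>) (Q \<psi>)"
    using Q_locally_close by metis
  have "dist (QB z) (QB z0) < e" if "z \<in> {0..ustar}" "dist z z0 < \<delta>" for z
  proof -
    have "locally_close N \<delta> (\<lambda>_. z) (\<lambda>_. z0)"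
      using that by (simp add: locally_close_def dist_real_def)
    then have "\<bar>Q (\<lambda>_. z) 0 - Q (\<lambda>_. z0) 0\<bar> \<le> e / 2"
      using close[OF admissible_const admissible_const] that z0 unfolding locally_close_def by auto
    then show ?thesis unfolding Q_const using \<open>e > 0\<close> by (simp add: dist_real_def)
  qed
  then show "\<exists>d>0. \<forall>z\<in>{0..ustar}. dist z z0 < d \<longrightarrow> dist (QB z) (QB z0) < e"
    using \<open>\<delta> > 0\<close> by blast
qed

text \<open>If \<open>QB \<gamma> \<le> \<gamma>\<close>, the intermediate value theorem, applied between a small \<open>z\<close> above the
  diagonal and \<open>\<gamma>\<close>, gives a positive fixed point below \<open>u\<^sup>*\<close>, contradicting minimality.\<close>
lemma Qbar_above_diagonal: "\<gamma> \<in> {0<..<ustar} \<Longrightarrow> \<gamma> < QB \<gamma>"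
proof (rule ccontr)
  assume \<gamma>: "\<gamma> \<in> {0<..<ustar}" and "\<not> \<gamma> < QB \<gamma>"
  obtain d where "d > 0" and d: "\<And>z. 0 < z \<Longrightarrow> z < d \<Longrightarrow> z < QB z"
    using Qbar_above_diagonal_near_0 by blast
  define z1 where "z1 = min (\<gamma>/2) (d/2)"
  have z1: "0 < z1" "z1 < d" "z1 \<le> \<gamma>" using \<gamma> \<open>d > 0\<close> unfolding z1_def by auto
  have "continuous_on {z1..\<gamma>} (\<lambda>z. QB z - z)"
    by (intro continuous_intros continuous_on_subset[OF Qbar_continuous]) (use z1 \<gamma> in auto)
  then obtain x where x: "z1 \<le> x" "x \<le> \<gamma>" "QB x - x = 0"
    using IVT2'[of "\<lambda>z. QB z - z" \<gamma> 0 z1] \<open>\<not> \<gamma> < QB \<gamma>\<close> d[OF z1(1,2)] z1(3) by auto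
  then have "ustar \<le> x" using ustar_minimal z1 by auto
  then show False using x \<gamma> by auto
qed

end

lemma C1_differentiable_on_UNIV_deriv:
  fixes f :: "real \<Rightarrow> real"
  assumes "f C1_differentiable_on UNIV"
  shows "\<And>x. (f has_real_derivative deriv f x) (at x)" "continuous_on UNIV (deriv f)"
proof -
  obtain f' where f': "\<forall>x\<in>UNIV. (f has_vector_derivative f' x) (at x)" "continuous_on UNIV f'"
    using assms unfolding C1_differentiable_on_def by blast
  then have "(f has_real_derivative f' x) (at x)" for x
    by (simp add: has_real_derivative_iff_has_vector_derivative)
  moreover from this have "deriv f = f'" by (auto intro!: DERIV_imp_deriv)
  ultimately show "(f has_real_derivative deriv f x) (at x)" "continuous_on UNIV (deriv f)" for x
    using f'(2) by auto
qed

lemma delayed_time_mono: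
  assumes "\<And>x. (tau has_real_derivative deriv tau x) (at x)" "\<forall>t. deriv tau t < 1" "a \<le> s"
  shows "a - tau a \<le> s - tau s"
proof (cases "a = s")
  case False
  have "((\<lambda>s. s - tau s) has_real_derivative 1 - deriv tau x) (at x)" for x
    by (rule DERIV_diff[OF DERIV_ident assms(1)])
  then have "\<exists>y. ((\<lambda>s. s - tau s) has_real_derivative y) (at x) \<and> y > 0" for x
    using assms(2)[rule_format, of x] by (intro exI[of _ "1 - deriv tau x"]) simp
  then show ?thesis
    using DERIV_pos_imp_increasing[of a s "\<lambda>s. s - tau s"] assms(3) False by force
qed simp

theorem lemma4p1:
  fixes T alpha beta ta tb zs ustar :: real
    and DM DI dM dI tau p h h' :: "real \<Rightarrow> real"
  defines "Q \<equiv> Qop T DM dM DI dI tau p h ta tb"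
    and "QB \<equiv> Qbar T dM DI dI tau p h ta tb"
  assumes T_pos: "T > 0"
    and C1: "DM C1_differentiable_on UNIV" "DI C1_differentiable_on UNIV"
            "dM C1_differentiable_on UNIV" "dI C1_differentiable_on UNIV"
            "tau C1_differentiable_on UNIV" "p C1_differentiable_on UNIV"
    and per: "periodic T DM" "periodic T DI" "periodic T dM" "periodic T dI"
             "periodic T tau" "periodic T p"
    and ranges: "\<forall>t. DM t \<ge> 0" "\<forall>t. DI t \<ge> 0" "\<forall>t. dM t > 0" "\<forall>t. dI t > 0"
                "\<forall>t. tau t > 0" "\<forall>t. p t \<ge> 0"
    and h_C1: "continuous_on {0..} h'"
              "\<forall>z \<ge> 0. (h has_real_derivative h' z) (at z within {0..})"
    and h_range: "\<forall>z \<ge> 0. h z \<ge> 0"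
    and a_order: "0 < alpha" "alpha \<le> beta" "beta < ta" "ta \<le> tb" "tb < T"
    and a_delay: "ta - tau ta = alpha" "tb - tau tb = beta"
    and a_p: "\<forall>t \<in> {0..alpha} \<union> {beta..T}. p t = 0"
    and b: "\<forall>t. deriv tau t < 1"
    and c: "h 0 = 0" "(h \<longlongrightarrow> 0) at_top" "zs > 0"
           "strict_mono_on {0..<zs} h"
           "\<forall>x y. zs \<le> x \<and> x < y \<longrightarrow> h y < h x"
    and d: "\<forall>z \<ge> 0. \<forall>l \<in> {0<..<1}. h (l * z) \<ge> l * h z"
    and e: "Lnum T dM dI tau p (h' 0) ta tb > 1"
    and ustar: "ustar > 0" "QB ustar = ustar"
               "\<forall>z > 0. QB z = z \<longrightarrow> ustar \<le> z"
    and h_mono: "mono_on {0..ustar} h"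
  shows "(\<forall>phi \<in> Cr ustar. Q phi \<in> Cr ustar)
    \<and> (\<forall>y. \<forall>phi \<in> Cr ustar. Q (translate y phi) = translate y (Q phi))
    \<and> (\<forall>phi \<in> Cr ustar. \<forall>\<epsilon> > 0. \<exists>\<delta> > 0. \<forall>psi \<in> Cr ustar.
          conorm (\<lambda>x. psi x - phi x) < \<delta> \<longrightarrow> conorm (\<lambda>x. Q psi x - Q phi x) < \<epsilon>)
    \<and> (\<forall>u \<in> Cr ustar. \<forall>v \<in> Cr ustar. (\<forall>x. v x \<le> u x) \<longrightarrow> (\<forall>x. Q v x \<le> Q u x))
    \<and> (QB ` {0..ustar} \<subseteq> {0..ustar} \<and> {z \<in> {0..ustar}. QB z = z} = {0, ustar}
       \<and> (\<forall>\<gamma> \<in> {0<..<ustar}. \<forall>x. Q (\<lambda>_. \<gamma>) x > \<gamma>))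
    \<and> (\<forall>phi \<in> Cr ustar. \<forall>l \<in> {0<..<1}. \<forall>x. Q (\<lambda>y. l * phi y) x \<ge> l * Q phi x)"
proof -
  note tau' = C1_differentiable_on_UNIV_deriv[OF C1(5)]
  have cont: "continuous_on UNIV DM" "continuous_on UNIV DI" "continuous_on UNIV dM"
    "continuous_on UNIV dI" "continuous_on UNIV tau" "continuous_on UNIV p"
    using C1 by (simp_all add: C1_differentiable_imp_continuous_on)
  have "continuous_on {0..} h"
    using h_C1(2) by (intro DERIV_continuous_on) auto
  moreover have "\<forall>s\<in>{ta..tb}. 0 \<le> s - tau s \<and> s - tau s \<le> s \<and> s \<le> T"
    using delayed_time_mono[OF tau'(1) b] a_delay a_order ranges(5) by (force simp: less_imp_le)
  ultimately interpret delay_model_minimal_fixed_point T ta tb ustar DM DI dM dI tau p h "h' 0"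
    using cont tau'(2) ranges h_range h_mono ustar a_order(4) b c(1) d e h_C1(2)
    by unfold_locales (auto simp: QB_def less_imp_le)
  show ?thesis
    unfolding Q_def QB_def
  proof (intro conjI)
    show "\<forall>\<gamma>\<in>{0<..<ustar}. \<forall>x. \<gamma> < Qop T DM dM DI dI tau p h ta tb (\<lambda>_. \<gamma>) x"
      using Qbar_above_diagonal by (simp add: Q_const)
  qed (use Q_maps_Cr Q_translate[OF Cr_admissible] Q_conorm_continuous
         Q_mono[OF Cr_admissible Cr_admissible] Q_cmult[OF Cr_admissible]
         Qbar_maps_interval Qbar_fixed_points in blast)+
qed

end
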